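(* Let $p$ be prime, $\mathcal{A}=\mathbb{Z}/p$, $D\ge1$, let $\mathfrak{F}$ be a nontrivial LCA on $\mathcal{A}^{\mathbb{Z}^D}$, and let $\mu$ be a harmonically mixing probability measure on $\mathcal{A}^{\mathbb{Z}^D}$. Then there is $J\subset\mathbb{N}$ of Cesàro density 1 such that $\mathfrak{F}^j\mu\to\eta$ weak* as $j\to\infty$, $j\in J$; in particular $\frac1N\sum_{n=1}^N\mathfrak{F}^n\mu\to\eta$ weak*.
   Context: $\eta$ is the Haar measure on $\mathcal{A}^{\mathbb{Z}^D}$; $\mathfrak{F}^j\mu=\mu\circ\mathfrak{F}^{-j}$. An LCA on $\mathcal{A}^{\mathbb{Z}^D}$ is $\mathfrak{F}=\sum_{\vec u\in U}f_{\vec u}\sigma^{\vec u}$ ($U$ finite, $(\sigma^{\vec m}\mathbf{a})_{\vec n}=a_{\vec m+\vec n}$), nontrivial if at least two coefficients are nonzero. Characters are $\chi=\bigotimes_{\vec n}\chi_{\vec n}$, all but finitely many $\chi_{\vec n}$ trivial; rank = number of nontrivial $\chi_{\vec n}$. $\mu$ is harmonically mixing if for every $\varepsilon>0$ there is $R$ with rank$(\chi)>R\Rightarrow|\int\chi\,d\mu|<\varepsilon$. Cesàro density 1 means $|J\cap[1,N]|/N\to1$. *)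

theory Defs
  imports "HOL-Probability.Probability"
begin

text \<open>Configurations on the lattice Z^D (D = CARD('d) \<ge> 1) with values in Z/p,
  where Z/p is represented by the residues {0..<p}. The configuration space
  carries the product sigma-algebra and the product topology (the function
  type carries the product topology; nat has the discrete topology).\<close>

definition cfg_space :: "nat \<Rightarrow> ((int ^ 'd) \<Rightarrow> nat) measure" where
  "cfg_space p = PiM UNIV (\<lambda>_. count_space {0..<p})"

definition haar :: "nat \<Rightarrow> ((int ^ 'd) \<Rightarrow> nat) measure" where
  "haar p = PiM UNIV (\<lambda>_. uniform_count_measure {0..<p})"

definition lca :: "nat \<Rightarrow> ((int ^ 'd) \<Rightarrow> nat) \<Rightarrow> ((int ^ 'd) \<Rightarrow> nat) \<Rightarrow> ((int ^ 'd) \<Rightarrow> nat)" where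
  "lca p f a = (\<lambda>n. (\<Sum>u\<in>{u. f u \<noteq> 0}. f u * a (u + n)) mod p)"

definition lca_coeffs :: "nat \<Rightarrow> ((int ^ 'd) \<Rightarrow> nat) \<Rightarrow> bool" where
  "lca_coeffs p f \<longleftrightarrow> finite {u. f u \<noteq> 0} \<and> (\<forall>u. f u < p)"

definition nontrivial_lca :: "((int ^ 'd) \<Rightarrow> nat) \<Rightarrow> bool" where
  "nontrivial_lca f \<longleftrightarrow> card {u. f u \<noteq> 0} \<ge> 2"

text \<open>Characters: k n \<in> Z/p indexes the character chi_n(x) = exp(2 pi i k_n x / p);
  all but finitely many trivial. chi = tensor product of the chi_n.\<close>
definition char_index :: "nat \<Rightarrow> ((int ^ 'd) \<Rightarrow> nat) \<Rightarrow> bool" where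
  "char_index p k \<longleftrightarrow> finite {n. k n \<noteq> 0} \<and> (\<forall>n. k n < p)"

definition character :: "nat \<Rightarrow> ((int ^ 'd) \<Rightarrow> nat) \<Rightarrow> ((int ^ 'd) \<Rightarrow> nat) \<Rightarrow> complex" where
  "character p k a = (\<Prod>n\<in>{n. k n \<noteq> 0}. cis (2 * pi * real (k n * a n) / real p))"

definition char_rank :: "((int ^ 'd) \<Rightarrow> nat) \<Rightarrow> nat" where
  "char_rank k = card {n. k n \<noteq> 0}"

definition harmonically_mixing :: "nat \<Rightarrow> ((int ^ 'd) \<Rightarrow> nat) measure \<Rightarrow> bool" where
  "harmonically_mixing p \<mu> \<longleftrightarrow>
     (\<forall>\<epsilon>>0. \<exists>R. \<forall>k. char_index p k \<and> char_rank k > R \<longrightarrow>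
        cmod (integral\<^sup>L \<mu> (character p k)) < \<epsilon>)"

definition weak_star_along :: "nat \<Rightarrow> (nat \<Rightarrow> ((int ^ 'd) \<Rightarrow> nat) measure) \<Rightarrow> nat set
     \<Rightarrow> ((int ^ 'd) \<Rightarrow> nat) measure \<Rightarrow> bool" where
  "weak_star_along p \<nu> J \<nu>0 \<longleftrightarrow>
     (\<forall>g :: ((int ^ 'd) \<Rightarrow> nat) \<Rightarrow> real. continuous_on (space (cfg_space p)) g \<longrightarrow>
        ((\<lambda>j. integral\<^sup>L (\<nu> j) g) \<longlongrightarrow> integral\<^sup>L \<nu>0 g) (sequentially \<sqinter> principal J))"

definition cesaro_density_one :: "nat set \<Rightarrow> bool" where
  "cesaro_density_one J \<longleftrightarrow>
     ((\<lambda>N. real (card (J \<inter> {1..N})) / real N) \<longlonglongrightarrow> 1)"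

end

theory Submission
  imports Defs "HOL-Library.Poly_Mapping" "HOL-Library.Log_Nat"
begin

text \<open>Weak* convergence to the Haar measure only needs to be tested on
  characters: the integral of a nontrivial character \<open>\<chi>\<^sub>k\<close> against \<open>F\<^sup>j \<mu>\<close> equals
  the integral of \<open>\<chi>\<close> indexed by \<open>F\<^sub>*\<^sup>j k\<close> against \<open>\<mu>\<close>, where \<open>F\<^sub>*\<close> is the dual
  automaton, so by harmonic mixing it suffices that the rank of \<open>F\<^sub>*\<^sup>j k\<close> tends
  to infinity along \<open>J\<close>. In the group ring of \<open>\<int>\<^sup>D\<close> modulo p, \<open>F\<^sub>*\<^sup>j k\<close> is \<open>k f\<^sup>j\<close>.
  After projecting \<open>\<int>\<^sup>D\<close> to \<open>\<int>\<close> injectively on the supports and writing \<open>j\<close> in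
  base \<open>Q = p\<^sup>e\<close>, the Frobenius congruence \<open>f(x)\<^sup>Q \<equiv> f(x\<^sup>Q)\<close> shows that each
  digit one of \<open>j\<close> at least doubles the number of coefficients not divisible by p.
  Numbers with boundedly many digits one have density zero, so a diagonal
  argument yields a set \<open>J\<close> of density one along which the number of digits one
  tends to infinity in every base. As the integrals are bounded, convergence
  along \<open>J\<close> gives Cesaro convergence.\<close>

section \<open>Congruences modulo p and the Frobenius map\<close>

definition mod_cong :: "nat \<Rightarrow> 'a::comm_ring_1 \<Rightarrow> 'a \<Rightarrow> bool" where
  "mod_cong p A B \<longleftrightarrow> of_nat p dvd A - B"

lemma mod_cong_refl [simp]: "mod_cong p A A"
  by (simp add: mod_cong_def)

lemma mod_cong_trans [trans]: "mod_cong p A B \<Longrightarrow> mod_cong p B C \<Longrightarrow> mod_cong p A C"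
  unfolding mod_cong_def by (drule (1) dvd_add) simp

lemma mod_cong_diff: "mod_cong p A B \<Longrightarrow> mod_cong p C D \<Longrightarrow> mod_cong p (A - C) (B - D)"
  unfolding mod_cong_def by (metis dvd_diff diff_diff_eq2 diff_add_eq add_diff_eq diff_diff_add)

lemma mod_cong_mult: "mod_cong p A B \<Longrightarrow> mod_cong p C D \<Longrightarrow> mod_cong p (A * C) (B * D)"
proof -
  assume "mod_cong p A B" "mod_cong p C D"
  then have "of_nat p dvd (A - B) * C + B * (C - D)"
    unfolding mod_cong_def by (intro dvd_add dvd_mult2 dvd_mult)
  then show ?thesis
    unfolding mod_cong_def by (simp add: algebra_simps)
qed

lemma mod_cong_power: "mod_cong p A B \<Longrightarrow> mod_cong p (A ^ n) (B ^ n)"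
  by (induction n) (auto intro: mod_cong_mult)

lemma mod_cong_add_power_prime:
  fixes a b :: "'a::comm_ring_1"
  assumes "prime p"
  shows "mod_cong p ((a + b) ^ p) (a ^ p + b ^ p)"
proof -
  let ?t = "\<lambda>k. of_nat (p choose k) * a ^ k * b ^ (p - k)"
  have p0: "p > 0" using assms prime_gt_0_nat by blast
  have "(a + b) ^ p = (\<Sum>k\<in>{0,p}. ?t k) + (\<Sum>k\<in>{..p} - {0,p}. ?t k)"
    unfolding binomial_ring by (subst sum.subset_diff[of "{0,p}"]) (auto simp: add.commute)
  also have "(\<Sum>k\<in>{0,p}. ?t k) = a ^ p + b ^ p"
    using p0 by (simp add: add.commute)
  finally have "(a + b) ^ p - (a ^ p + b ^ p) = (\<Sum>k\<in>{..p} - {0,p}. ?t k)"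
    by simp
  moreover have "of_nat p dvd (\<Sum>k\<in>{..p} - {0,p}. ?t k)"
  proof (rule dvd_sum)
    fix k assume "k \<in> {..p} - {0,p}"
    then have "p dvd p choose k" using assms by (intro dvd_choose_prime) auto
    then show "of_nat p dvd ?t k" by (intro dvd_mult2) (metis dvd_def of_nat_mult)
  qed
  ultimately show ?thesis
    unfolding mod_cong_def by simp
qed

lemma mod_cong_diff_power_prime:
  fixes a b :: "'a::comm_ring_1"
  assumes "prime p"
  shows "mod_cong p ((a - b) ^ p) (a ^ p - b ^ p)"
proof -
  have "of_nat p dvd a ^ p - ((a - b) ^ p + b ^ p)"
    using mod_cong_add_power_prime[OF assms, of "a - b" b] by (simp add: mod_cong_def)
  then have "of_nat p dvd - (a ^ p - ((a - b) ^ p + b ^ p))"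
    by (simp only: dvd_minus_iff)
  then show ?thesis
    unfolding mod_cong_def by (simp add: algebra_simps)
qed

definition pushforward :: "('g \<Rightarrow> 'h) \<Rightarrow> ('g \<Rightarrow>\<^sub>0 int) \<Rightarrow> ('h \<Rightarrow>\<^sub>0 int)" where
  "pushforward \<psi> A = frag_extend (\<lambda>u. frag_of (\<psi> u)) A"

lemma pushforward_0 [simp]: "pushforward \<psi> 0 = 0"
  by (simp add: pushforward_def)

lemma pushforward_frag_of [simp]: "pushforward \<psi> (frag_of u) = frag_of (\<psi> u)"
  by (simp add: pushforward_def)

lemma pushforward_diff: "pushforward \<psi> (A - B) = pushforward \<psi> A - pushforward \<psi> B"
  by (simp add: pushforward_def frag_extend_diff)

lemma pushforward_compose: "pushforward \<phi> (pushforward \<psi> A) = pushforward (\<phi> \<circ> \<psi>) A"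
proof -
  have "(\<lambda>u. frag_of (\<psi> u)) = frag_of \<circ> \<psi>" by auto
  then show ?thesis
    unfolding pushforward_def by (simp only: frag_extend_compose) (simp add: o_def)
qed

lemma pushforward_id: "pushforward (\<lambda>u. u) A = A"
  unfolding pushforward_def by (simp flip: frag_expansion)

lemma lookup_pushforward:
  "Poly_Mapping.lookup (pushforward \<psi> A) n = (\<Sum>u\<in>{u\<in>Poly_Mapping.keys A. \<psi> u = n}. Poly_Mapping.lookup A u)"
proof -
  have "Poly_Mapping.lookup (pushforward \<psi> A) n = (\<Sum>u\<in>Poly_Mapping.keys A. if \<psi> u = n then Poly_Mapping.lookup A u else 0)"
    by (auto simp: pushforward_def frag_extend_def lookup_sum lookup_single intro!: sum.cong)
  then show ?thesis
    by (simp add: sum.inter_filter)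
qed

context
  fixes \<psi> :: "'g::comm_monoid_add \<Rightarrow> 'h::comm_monoid_add"
  assumes additive: "\<And>x y. \<psi> (x + y) = \<psi> x + \<psi> y" and zero: "\<psi> 0 = 0"
begin

lemma pushforward_mult: "pushforward \<psi> (A * B) = pushforward \<psi> A * pushforward \<psi> B"
proof -
  have frag_of_mult: "pushforward \<psi> (frag_of u * B) = frag_of (\<psi> u) * pushforward \<psi> B" for u
    using subset_UNIV[of "Poly_Mapping.keys B"]
    by (induction B rule: frag_induction) (simp_all add: mult_single additive right_diff_distrib pushforward_diff)
  show ?thesis
    using subset_UNIV[of "Poly_Mapping.keys A"]
    by (induction A rule: frag_induction) (simp_all add: frag_of_mult left_diff_distrib pushforward_diff)
qed

lemma pushforward_one: "pushforward \<psi> 1 = 1"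
  using pushforward_frag_of[of \<psi> 0] by (simp add: zero)

lemma pushforward_power: "pushforward \<psi> (A ^ n) = pushforward \<psi> A ^ n"
  by (induction n) (simp_all add: pushforward_one pushforward_mult)

end

text \<open>Frobenius: raising to the p-th power mod p is additive, so on
  the group ring \<open>\<int>[\<int>]\<close> it acts as the substitution \<open>x \<mapsto> x\<^sup>p\<close>.\<close>

lemma mod_cong_power_prime_pushforward:
  assumes "prime p"
  shows "mod_cong p ((A :: int \<Rightarrow>\<^sub>0 int) ^ p) (pushforward (\<lambda>n. int p * n) A)"
  using subset_UNIV[of "Poly_Mapping.keys A"]
proof (induction A rule: frag_induction)
  case zero
  show ?case using assms prime_gt_0_nat by (simp add: zero_power pushforward_def)
next
  case (one u)
  have "frag_of u ^ n = frag_of (int n * u)" for n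
    by (induction n) (simp_all add: mult_single algebra_simps)
  then show ?case by simp
next
  case (diff a b)
  have "mod_cong p ((a - b) ^ p) (a ^ p - b ^ p)"
    by (rule mod_cong_diff_power_prime[OF assms])
  also have "mod_cong p \<dots> (pushforward (\<lambda>n. int p * n) a - pushforward (\<lambda>n. int p * n) b)"
    using diff by (rule mod_cong_diff)
  finally show ?case
    by (simp add: pushforward_diff)
qed

lemma mod_cong_power_prime_power_pushforward:
  assumes "prime p"
  shows "mod_cong p ((A :: int \<Rightarrow>\<^sub>0 int) ^ (p ^ e)) (pushforward (\<lambda>n. int (p ^ e) * n) A)"
proof (induction e)
  case 0
  then show ?case by (simp add: pushforward_id)
next
  case (Suc e)
  let ?A = "pushforward (\<lambda>n. int (p ^ e) * n) A"
  have "A ^ (p ^ Suc e) = (A ^ (p ^ e)) ^ p"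
    by (simp add: power_mult[symmetric] mult.commute)
  also have "mod_cong p \<dots> (?A ^ p)"
    by (rule mod_cong_power[OF Suc])
  also have "mod_cong p \<dots> (pushforward (\<lambda>n. int p * n) ?A)"
    by (rule mod_cong_power_prime_pushforward[OF assms])
  also have "pushforward (\<lambda>n. int p * n) ?A = pushforward (\<lambda>n. int (p ^ Suc e) * n) A"
    by (simp add: pushforward_compose o_def mult.assoc)
  finally show ?case .
qed

section \<open>Support modulo p in the group ring\<close>

definition supp_mod :: "nat \<Rightarrow> ('g \<Rightarrow>\<^sub>0 int) \<Rightarrow> 'g set" where
  "supp_mod p A = {n. \<not> int p dvd Poly_Mapping.lookup A n}"

lemma supp_mod_subset_keys: "supp_mod p A \<subseteq> Poly_Mapping.keys A"
  unfolding supp_mod_def by (auto simp: in_keys_iff)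

lemma finite_supp_mod [simp]: "finite (supp_mod p A)"
  by (rule finite_subset[OF supp_mod_subset_keys]) simp

lemma lookup_of_nat_mult:
  "Poly_Mapping.lookup (of_nat p * (E :: 'g::monoid_add \<Rightarrow>\<^sub>0 int)) n = int p * Poly_Mapping.lookup E n"
proof -
  have "of_nat p * E = Poly_Mapping.map ((*) (int p)) E"
    by (simp add: mult_map_scale_conv_mult)
  then show ?thesis by (simp add: map.rep_eq when_def)
qed

lemma supp_mod_cong:
  assumes "mod_cong p (A :: 'g::comm_monoid_add \<Rightarrow>\<^sub>0 int) B"
  shows "supp_mod p A = supp_mod p B"
proof -
  obtain E where E: "A - B = of_nat p * E"
    using assms unfolding mod_cong_def by blast
  have "Poly_Mapping.lookup A n = Poly_Mapping.lookup B n + int p * Poly_Mapping.lookup E n" for n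
    using arg_cong[OF E, of "\<lambda>X. Poly_Mapping.lookup X n"] by (simp add: lookup_minus lookup_of_nat_mult)
  then show ?thesis
    unfolding supp_mod_def by (auto simp: dvd_add_left_iff)
qed

definition reduce_mod :: "nat \<Rightarrow> ('g \<Rightarrow>\<^sub>0 int) \<Rightarrow> ('g \<Rightarrow>\<^sub>0 int)" where
  "reduce_mod p A = Abs_poly_mapping (\<lambda>n. Poly_Mapping.lookup A n mod int p)"

lemma lookup_reduce_mod: "Poly_Mapping.lookup (reduce_mod p A) n = Poly_Mapping.lookup A n mod int p"
proof -
  have "finite {n. Poly_Mapping.lookup A n mod int p \<noteq> 0}"
    by (rule finite_subset[of _ "Poly_Mapping.keys A"]) (auto simp: in_keys_iff)
  then show ?thesis unfolding reduce_mod_def by simp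
qed

lemma keys_reduce_mod: "Poly_Mapping.keys (reduce_mod p A) = supp_mod p A"
  by (auto simp: in_keys_iff lookup_reduce_mod supp_mod_def dvd_eq_mod_eq_0)

lemma mod_cong_reduce_mod: "mod_cong p (A :: 'g::comm_monoid_add \<Rightarrow>\<^sub>0 int) (reduce_mod p A)"
proof -
  have "finite {n. Poly_Mapping.lookup A n div int p \<noteq> 0}"
    by (rule finite_subset[of _ "Poly_Mapping.keys A"]) (auto simp: in_keys_iff)
  then have "A - reduce_mod p A = of_nat p * Abs_poly_mapping (\<lambda>n. Poly_Mapping.lookup A n div int p)"
    by (intro poly_mapping_eqI)
      (simp add: lookup_minus lookup_reduce_mod lookup_of_nat_mult minus_mod_eq_mult_div)
  then show ?thesis unfolding mod_cong_def dvd_def by blast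
qed

lemma lookup_mult_keys:
  fixes A B :: "'g::ab_group_add \<Rightarrow>\<^sub>0 int"
  shows "Poly_Mapping.lookup (A * B) n = (\<Sum>u\<in>Poly_Mapping.keys A. Poly_Mapping.lookup A u * Poly_Mapping.lookup B (n - u))"
proof -
  have inner: "(\<Sum>q. Poly_Mapping.lookup B q when n = l + q) = Poly_Mapping.lookup B (n - l)" for l
  proof -
    have "(\<Sum>q. Poly_Mapping.lookup B q when n = l + q) = (\<Sum>q. Poly_Mapping.lookup B q when q = n - l)"
      by (rule arg_cong[where f=Sum_any]) (auto simp: when_def fun_eq_iff algebra_simps)
    then show ?thesis by (simp add: Sum_any_when_equal)
  qed
  have "Poly_Mapping.lookup (A * B) n = (\<Sum>l. Poly_Mapping.lookup A l * Poly_Mapping.lookup B (n - l))"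
    by (simp add: lookup_mult inner)
  also have "\<dots> = (\<Sum>l\<in>Poly_Mapping.keys A. Poly_Mapping.lookup A l * Poly_Mapping.lookup B (n - l))"
    by (rule Sum_any.expand_superset) (auto simp: in_keys_iff)
  finally show ?thesis .
qed

lemma supp_mod_mult_reduce_mod:
  fixes A B :: "'g::ab_group_add \<Rightarrow>\<^sub>0 int"
  shows "supp_mod p (A * B) = supp_mod p (reduce_mod p A * reduce_mod p B)"
  by (intro supp_mod_cong mod_cong_mult mod_cong_reduce_mod)

lemma lookup_reduce_mod_mult:
  fixes A B :: "'g::ab_group_add \<Rightarrow>\<^sub>0 int"
  shows "Poly_Mapping.lookup (reduce_mod p A * reduce_mod p B) n =
    (\<Sum>u\<in>supp_mod p A. Poly_Mapping.lookup A u mod p * (Poly_Mapping.lookup B (n - u) mod p))"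
  by (simp add: lookup_mult_keys keys_reduce_mod lookup_reduce_mod)

lemma supp_mod_mult_subset:
  fixes A B :: "'g::ab_group_add \<Rightarrow>\<^sub>0 int"
  shows "supp_mod p (A * B) \<subseteq> {u + v |u v. u \<in> supp_mod p A \<and> v \<in> supp_mod p B}"
proof
  fix n assume "n \<in> supp_mod p (A * B)"
  then have "n \<in> supp_mod p (reduce_mod p A * reduce_mod p B)"
    by (metis supp_mod_mult_reduce_mod)
  then have "Poly_Mapping.lookup (reduce_mod p A * reduce_mod p B) n \<noteq> 0"
    by (auto simp: supp_mod_def)
  then obtain u where u: "u \<in> supp_mod p A"
    and "Poly_Mapping.lookup A u mod p * (Poly_Mapping.lookup B (n - u) mod p) \<noteq> 0"
    unfolding lookup_reduce_mod_mult by (meson sum.not_neutral_contains_not_neutral)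
  then have "n - u \<in> supp_mod p B"
    by (simp add: supp_mod_def dvd_eq_mod_eq_0)
  moreover have "n = u + (n - u)"
    by simp
  ultimately show "n \<in> {u + v |u v. u \<in> supp_mod p A \<and> v \<in> supp_mod p B}"
    using u by blast
qed

text \<open>A sum \<open>u\<^sub>0 + v\<^sub>0\<close> that is attained only once contributes a single
  product of units mod p to the coefficient of \<open>A * B\<close>.\<close>

lemma add_mem_supp_mod_mult:
  fixes A B :: "'g::ab_group_add \<Rightarrow>\<^sub>0 int"
  assumes p: "prime p" and u0: "u0 \<in> supp_mod p A" and v0: "v0 \<in> supp_mod p B"
    and unique: "\<And>u v. u \<in> supp_mod p A \<Longrightarrow> v \<in> supp_mod p B \<Longrightarrow> u + v = u0 + v0 \<Longrightarrow> u = u0"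
  shows "u0 + v0 \<in> supp_mod p (A * B)"
proof -
  let ?a = "\<lambda>u. Poly_Mapping.lookup A u mod p" and ?b = "\<lambda>v. Poly_Mapping.lookup B v mod p"
  have zero: "?a u * ?b (u0 + v0 - u) = 0" if "u \<in> supp_mod p A - {u0}" for u
  proof -
    have "u0 + v0 - u \<notin> supp_mod p B"
      using unique[of u "u0 + v0 - u"] that by auto
    then show ?thesis
      by (simp add: supp_mod_def dvd_eq_mod_eq_0)
  qed
  have "Poly_Mapping.lookup (reduce_mod p A * reduce_mod p B) (u0 + v0)
      = ?a u0 * ?b v0 + (\<Sum>u\<in>supp_mod p A - {u0}. ?a u * ?b (u0 + v0 - u))"
    unfolding lookup_reduce_mod_mult using u0 by (subst sum.remove) auto
  also have "(\<Sum>u\<in>supp_mod p A - {u0}. ?a u * ?b (u0 + v0 - u)) = 0"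
    by (intro sum.neutral ballI zero)
  finally have "Poly_Mapping.lookup (reduce_mod p A * reduce_mod p B) (u0 + v0) = ?a u0 * ?b v0"
    by simp
  moreover have "\<not> int p dvd ?a u0 * ?b v0"
    using u0 v0 p by (simp add: supp_mod_def prime_dvd_mult_iff dvd_mod_iff)
  ultimately have "u0 + v0 \<in> supp_mod p (reduce_mod p A * reduce_mod p B)"
    by (simp add: supp_mod_def)
  then show ?thesis
    by (metis supp_mod_mult_reduce_mod)
qed

definition supp_max :: "nat \<Rightarrow> (int \<Rightarrow>\<^sub>0 int) \<Rightarrow> int" where
  "supp_max p A = Max (supp_mod p A)"

definition supp_min :: "nat \<Rightarrow> (int \<Rightarrow>\<^sub>0 int) \<Rightarrow> int" where
  "supp_min p A = Min (supp_mod p A)"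

definition supp_width :: "nat \<Rightarrow> (int \<Rightarrow>\<^sub>0 int) \<Rightarrow> int" where
  "supp_width p A = supp_max p A - supp_min p A"

lemma supp_max_in: "supp_mod p A \<noteq> {} \<Longrightarrow> supp_max p A \<in> supp_mod p A"
  unfolding supp_max_def by simp

lemma supp_min_in: "supp_mod p A \<noteq> {} \<Longrightarrow> supp_min p A \<in> supp_mod p A"
  unfolding supp_min_def by simp

lemma le_supp_max: "n \<in> supp_mod p A \<Longrightarrow> n \<le> supp_max p A"
  unfolding supp_max_def by simp

lemma supp_min_le: "n \<in> supp_mod p A \<Longrightarrow> supp_min p A \<le> n"
  unfolding supp_min_def by simp

lemma supp_width_nonneg: "supp_mod p A \<noteq> {} \<Longrightarrow> 0 \<le> supp_width p A"
  unfolding supp_width_def using supp_min_le[OF supp_max_in] by simp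

lemma supp_width_pos:
  assumes "card (supp_mod p A) \<ge> 2"
  shows "supp_width p A \<ge> 1"
proof -
  have "\<not> card (supp_mod p A) \<le> Suc 0"
    using assms by simp
  then obtain x y where xy: "x \<in> supp_mod p A" "y \<in> supp_mod p A" "x \<noteq> y"
    using card_le_Suc0_iff_eq[OF finite_supp_mod] by blast
  then have "supp_min p A \<le> min x y" "max x y \<le> supp_max p A"
    by (simp_all add: le_supp_max supp_min_le)
  then show ?thesis
    unfolding supp_width_def using xy(3) by linarith
qed

lemma supp_mod_mult_width:
  assumes p: "prime p" and A: "supp_mod p A \<noteq> {}" and B: "supp_mod p B \<noteq> {}"
  shows "supp_mod p (A * B) \<noteq> {}"
    and "supp_width p (A * B) = supp_width p A + supp_width p B"
proof -
  let ?M = "supp_max p A + supp_max p B" and ?m = "supp_min p A + supp_min p B"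
  have bounds: "?m \<le> n \<and> n \<le> ?M" if n: "n \<in> supp_mod p (A * B)" for n
  proof -
    obtain u v where "n = u + v" "u \<in> supp_mod p A" "v \<in> supp_mod p B"
      using supp_mod_mult_subset[of p A B] n by blast
    then show ?thesis
      by (simp add: add_mono le_supp_max supp_min_le)
  qed
  have M: "?M \<in> supp_mod p (A * B)"
  proof (rule add_mem_supp_mod_mult[OF p supp_max_in[OF A] supp_max_in[OF B]])
    fix u v assume "u \<in> supp_mod p A" "v \<in> supp_mod p B" "u + v = ?M"
    then show "u = supp_max p A"
      using le_supp_max[of u p A] le_supp_max[of v p B] by linarith
  qed
  have m: "?m \<in> supp_mod p (A * B)"
  proof (rule add_mem_supp_mod_mult[OF p supp_min_in[OF A] supp_min_in[OF B]])
    fix u v assume "u \<in> supp_mod p A" "v \<in> supp_mod p B" "u + v = ?m"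
    then show "u = supp_min p A"
      using supp_min_le[of u p A] supp_min_le[of v p B] by linarith
  qed
  show "supp_mod p (A * B) \<noteq> {}"
    using M by blast
  have "supp_max p (A * B) = ?M"
    using M bounds unfolding supp_max_def by (intro Max_eqI) auto
  moreover have "supp_min p (A * B) = ?m"
    using m bounds unfolding supp_min_def by (intro Min_eqI) auto
  ultimately show "supp_width p (A * B) = supp_width p A + supp_width p B"
    unfolding supp_width_def by simp
qed

lemma supp_mod_mult_power_width:
  assumes p: "prime p" and A: "supp_mod p A \<noteq> {}" and H: "supp_mod p H \<noteq> {}"
  shows "supp_mod p (A * H ^ b) \<noteq> {} \<and> supp_width p (A * H ^ b) = supp_width p A + int b * supp_width p H"
proof (induction b)
  case 0
  then show ?case using A by simp
next
  case (Suc b)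
  have eq: "A * H ^ Suc b = (A * H ^ b) * H"
    by (simp add: mult_ac)
  show ?case
    unfolding eq using supp_mod_mult_width[OF p _ H, of "A * H ^ b"] Suc by (simp add: algebra_simps)
qed

text \<open>Splitting \<open>C\<close> along the residue classes mod \<open>Q\<close>:
  \<open>C = \<Sum>\<^sub>r x\<^sup>r \<cdot> (decimate Q r C)(x\<^sup>Q)\<close>.\<close>

definition decimate :: "int \<Rightarrow> int \<Rightarrow> (int \<Rightarrow>\<^sub>0 int) \<Rightarrow> (int \<Rightarrow>\<^sub>0 int)" where
  "decimate Q r C = Abs_poly_mapping (\<lambda>y. Poly_Mapping.lookup C (r + Q * y))"

definition dilate :: "int \<Rightarrow> (int \<Rightarrow>\<^sub>0 int) \<Rightarrow> (int \<Rightarrow>\<^sub>0 int)" where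
  "dilate Q B = pushforward (\<lambda>n. Q * n) B"

lemma lookup_decimate:
  assumes "Q \<noteq> 0"
  shows "Poly_Mapping.lookup (decimate Q r C) y = Poly_Mapping.lookup C (r + Q * y)"
proof -
  have "inj (\<lambda>y. r + Q * y)" using assms by (auto simp: inj_def)
  moreover have "{y. Poly_Mapping.lookup C (r + Q * y) \<noteq> 0} = (\<lambda>y. r + Q * y) -` Poly_Mapping.keys C"
    by (auto simp: in_keys_iff)
  ultimately have "finite {y. Poly_Mapping.lookup C (r + Q * y) \<noteq> 0}"
    using finite_vimageI[of "Poly_Mapping.keys C" "\<lambda>y. r + Q * y"] by simp
  then show ?thesis unfolding decimate_def by simp
qed

lemma supp_mod_decimate:
  "Q \<noteq> 0 \<Longrightarrow> supp_mod p (decimate Q r C) = {y. r + Q * y \<in> supp_mod p C}"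
  by (simp add: supp_mod_def lookup_decimate)

lemma supp_mod_decimate_nonempty:
  assumes "Q > 0" "n \<in> supp_mod p C"
  shows "supp_mod p (decimate Q (n mod Q) C) \<noteq> {}"
proof -
  have "n div Q \<in> supp_mod p (decimate Q (n mod Q) C)"
    using assms by (simp add: supp_mod_decimate)
  then show ?thesis by blast
qed

lemma supp_width_decimate:
  assumes "Q > 0" "supp_mod p (decimate Q r C) \<noteq> {}"
  shows "Q * supp_width p (decimate Q r C) \<le> supp_width p C"
proof -
  have "r + Q * supp_max p (decimate Q r C) \<le> supp_max p C"
    using supp_max_in[OF assms(2)] assms(1) by (intro le_supp_max) (simp add: supp_mod_decimate)
  moreover have "supp_min p C \<le> r + Q * supp_min p (decimate Q r C)"
    using supp_min_in[OF assms(2)] assms(1) by (intro supp_min_le) (simp add: supp_mod_decimate)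
  ultimately show ?thesis
    unfolding supp_width_def by (simp add: right_diff_distrib)
qed

lemma lookup_dilate:
  assumes "Q \<noteq> 0"
  shows "Poly_Mapping.lookup (dilate Q B) n = (if Q dvd n then Poly_Mapping.lookup B (n div Q) else 0)"
proof -
  have "{u \<in> Poly_Mapping.keys B. Q * u = n} =
      (if Q dvd n \<and> n div Q \<in> Poly_Mapping.keys B then {n div Q} else {})"
    using assms by auto
  then show ?thesis
    unfolding dilate_def lookup_pushforward by (simp add: in_keys_iff)
qed

lemma keys_dilate:
  assumes "Q \<noteq> 0"
  shows "Poly_Mapping.keys (dilate Q B) = (\<lambda>v. Q * v) ` Poly_Mapping.keys B"
proof (intro equalityI subsetI)
  fix n assume "n \<in> Poly_Mapping.keys (dilate Q B)"
  then have "Q dvd n" "n div Q \<in> Poly_Mapping.keys B"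
    using assms by (auto simp: in_keys_iff lookup_dilate split: if_splits)
  then show "n \<in> (\<lambda>v. Q * v) ` Poly_Mapping.keys B"
    by (metis dvd_mult_div_cancel image_eqI)
qed (use assms in \<open>auto simp: in_keys_iff lookup_dilate\<close>)

lemma lookup_mult_dilate:
  assumes "Q \<noteq> 0"
  shows "Poly_Mapping.lookup (C * dilate Q B) (r + Q * y) = Poly_Mapping.lookup (decimate Q r C * B) y"
proof -
  have inj: "inj_on (\<lambda>v. Q * v) (Poly_Mapping.keys B)"
    using assms by (auto simp: inj_on_def)
  have "Poly_Mapping.lookup (C * dilate Q B) (r + Q * y) = Poly_Mapping.lookup (dilate Q B * C) (r + Q * y)"
    by (simp add: mult.commute)
  also have "\<dots> = (\<Sum>v\<in>Poly_Mapping.keys B. Poly_Mapping.lookup B v * Poly_Mapping.lookup (decimate Q r C) (y - v))"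
    unfolding lookup_mult_keys keys_dilate[OF assms] sum.reindex[OF inj]
    using assms by (simp add: lookup_dilate lookup_decimate algebra_simps)
  also have "\<dots> = Poly_Mapping.lookup (B * decimate Q r C) y"
    by (rule lookup_mult_keys[symmetric])
  finally show ?thesis
    by (simp add: mult.commute)
qed

text \<open>Distinct residues give disjoint pieces of the support of \<open>C * B(x\<^sup>Q)\<close>.\<close>

lemma sum_card_supp_mod_decimate_le:
  assumes Q: "Q > 0" and R: "R \<subseteq> {0..<Q}"
  shows "(\<Sum>r\<in>R. card (supp_mod p (decimate Q r C * B))) \<le> card (supp_mod p (C * dilate Q B))"
proof -
  let ?piece = "\<lambda>r. (\<lambda>y. r + Q * y) ` supp_mod p (decimate Q r C * B)"
  have "finite R" using R finite_subset by blast
  moreover have "?piece r \<inter> ?piece r' = {}" if "r \<in> R" "r' \<in> R" "r \<noteq> r'" for r r'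
  proof -
    have "r + Q * y \<noteq> r' + Q * y'" for y y'
    proof
      assume "r + Q * y = r' + Q * y'"
      then have "(r + Q * y) mod Q = (r' + Q * y') mod Q"
        by simp
      moreover have "r mod Q = r" "r' mod Q = r'"
        using that R by auto
      ultimately show False
        using that(3) by simp
    qed
    then show ?thesis by blast
  qed
  ultimately have "(\<Sum>r\<in>R. card (?piece r)) = card (\<Union>r\<in>R. ?piece r)"
    by (intro card_UN_disjoint[symmetric]) auto
  also have "\<dots> \<le> card (supp_mod p (C * dilate Q B))"
    using Q by (intro card_mono finite_supp_mod) (auto simp: supp_mod_def lookup_mult_dilate)
  finally show ?thesis
    using Q by (simp add: card_image inj_on_def)
qed

lemma card_supp_mod_mult_dilate_ge:
  assumes Q: "Q > 0" and C: "supp_mod p C \<noteq> {}"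
    and N: "\<And>r. supp_mod p (decimate Q r C) \<noteq> {} \<Longrightarrow> N \<le> card (supp_mod p (decimate Q r C * B))"
  shows "N \<le> card (supp_mod p (C * dilate Q B))"
    and "1 \<le> supp_width p C \<Longrightarrow> supp_width p C < Q \<Longrightarrow> 2 * N \<le> card (supp_mod p (C * dilate Q B))"
proof -
  let ?r1 = "supp_max p C mod Q" and ?r2 = "supp_min p C mod Q"
  have N1: "N \<le> card (supp_mod p (decimate Q ?r1 C * B))"
    by (intro N supp_mod_decimate_nonempty Q supp_max_in C)
  have N2: "N \<le> card (supp_mod p (decimate Q ?r2 C * B))"
    by (intro N supp_mod_decimate_nonempty Q supp_min_in C)
  show "N \<le> card (supp_mod p (C * dilate Q B))"
    using N1 sum_card_supp_mod_decimate_le[OF Q, of "{?r1}" p C B] Q by simp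
  assume "1 \<le> supp_width p C" "supp_width p C < Q"
  then have "\<not> Q dvd supp_max p C - supp_min p C"
    unfolding supp_width_def by (auto dest: zdvd_imp_le)
  then have "?r1 \<noteq> ?r2"
    by (auto simp: mod_eq_dvd_iff)
  then show "2 * N \<le> card (supp_mod p (C * dilate Q B))"
    using N1 N2 sum_card_supp_mod_decimate_le[OF Q, of "{?r1, ?r2}" p C B] Q by simp
qed
section \<open>Digits one and the growth of the support\<close>

function ones_digits :: "nat \<Rightarrow> nat \<Rightarrow> nat" where
  "ones_digits Q j = (if Q < 2 \<or> j = 0 then 0 else of_bool (j mod Q = 1) + ones_digits Q (j div Q))"
  by auto
termination
  by (relation "Wellfounded.measure snd") auto

declare ones_digits.simps [simp del]

lemma ones_digits_0 [simp]: "ones_digits Q 0 = 0"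
  by (simp add: ones_digits.simps)

lemma ones_digits_add_mult:
  assumes "Q \<ge> 2" "b < Q"
  shows "ones_digits Q (b + Q * j) = of_bool (b = 1) + ones_digits Q j"
proof (cases "b + Q * j = 0")
  case True
  then show ?thesis using assms by simp
next
  case False
  then show ?thesis
    using assms by (subst ones_digits.simps) simp
qed

lemma supp_mod_mult_power_add_mult:
  assumes "prime p"
  shows "supp_mod p (A * H ^ (b + p ^ e * j)) = supp_mod p (A * H ^ b * dilate (int (p ^ e)) (H ^ j))"
proof (rule supp_mod_cong)
  have "A * H ^ (b + p ^ e * j) = A * H ^ b * (H ^ j) ^ (p ^ e)"
    by (simp add: power_add mult.assoc mult.commute[of "p ^ e"] flip: power_mult)
  also have "mod_cong p \<dots> (A * H ^ b * dilate (int (p ^ e)) (H ^ j))"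
    unfolding dilate_def by (intro mod_cong_mult mod_cong_refl mod_cong_power_prime_power_pushforward assms)
  finally show "mod_cong p (A * H ^ (b + p ^ e * j)) (A * H ^ b * dilate (int (p ^ e)) (H ^ j))" .
qed

lemma supp_width_decimate_mult_power_le:
  assumes p: "prime p" and A: "supp_mod p A \<noteq> {}" "supp_width p A \<le> K"
    and H: "supp_mod p H \<noteq> {}" "supp_width p H \<le> K"
    and b: "b < Q" and r: "supp_mod p (decimate (int Q) r (A * H ^ b)) \<noteq> {}"
  shows "supp_width p (decimate (int Q) r (A * H ^ b)) \<le> K"
proof -
  have "int b * supp_width p H \<le> int (Q - 1) * K"
    using b H(2) supp_width_nonneg[OF H(1)] by (intro mult_mono) auto
  then have "supp_width p (A * H ^ b) \<le> K + int (Q - 1) * K"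
    using supp_mod_mult_power_width[OF p A(1) H(1), of b] A(2) by linarith
  also have "\<dots> = int Q * K"
    using b by (simp add: of_nat_diff algebra_simps)
  finally have "int Q * supp_width p (decimate (int Q) r (A * H ^ b)) \<le> int Q * K"
    using supp_width_decimate[of "int Q" p r "A * H ^ b"] b r by linarith
  then show ?thesis
    using b by simp
qed

text \<open>The key estimate: write \<open>j = b + Q j'\<close>; by Frobenius
  \<open>A H\<^sup>j \<equiv> (A H\<^sup>b) \<cdot> (H\<^sup>j\<^sup>')(x\<^sup>Q)\<close>, and the decimations of \<open>A H\<^sup>b\<close>
  again have width at most \<open>K\<close>. A digit \<open>b = 1\<close> makes \<open>A H\<^sup>b\<close> hit two
  different residues mod \<open>Q\<close>, which doubles the count.\<close>

lemma two_power_ones_digits_le_card_supp_mod: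
  assumes p: "prime p" and Q: "Q = p ^ e" "e \<ge> 1"
    and H: "card (supp_mod p H) \<ge> 2" "supp_width p H \<le> K" "K + supp_width p H < int Q"
    and A: "supp_mod p A \<noteq> {}" "supp_width p A \<le> K"
  shows "2 ^ ones_digits Q j \<le> card (supp_mod p (A * H ^ j))"
  using A
proof (induction j arbitrary: A rule: less_induct)
  case (less j)
  have "p \<le> Q"
    using Q power_increasing[of 1 e p] prime_gt_0_nat[OF p] by simp
  then have Q2: "Q \<ge> 2"
    using prime_ge_2_nat[OF p] by linarith
  have H0: "supp_mod p H \<noteq> {}" and wH: "1 \<le> supp_width p H"
    using H(1) supp_width_pos by fastforce+
  show ?case
  proof (cases "j = 0")
    case True
    then show ?thesis
      using less.prems(1) by (simp add: Suc_le_eq card_gt_0_iff)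
  next
    case False
    define b j' where "b = j mod Q" and "j' = j div Q"
    have j: "j = b + Q * j'" "b < Q" "j' < j"
      using False Q2 by (simp_all add: b_def j'_def)
    define C where "C = A * H ^ b"
    have C: "supp_mod p C \<noteq> {}" "supp_width p C = supp_width p A + int b * supp_width p H"
      unfolding C_def using supp_mod_mult_power_width[OF p less.prems(1) H0] by auto
    have IH: "2 ^ ones_digits Q j' \<le> card (supp_mod p (decimate (int Q) r C * H ^ j'))"
      if r: "supp_mod p (decimate (int Q) r C) \<noteq> {}" for r
      using less.IH[OF j(3) r] supp_width_decimate_mult_power_le[OF p less.prems H0 H(2) j(2)] r
      by (simp add: C_def)
    have "ones_digits Q j = of_bool (b = 1) + ones_digits Q j'"
      unfolding j(1) by (rule ones_digits_add_mult[OF Q2 j(2)])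
    moreover have "supp_mod p (A * H ^ j) = supp_mod p (C * dilate (int Q) (H ^ j'))"
      unfolding j(1) C_def Q by (rule supp_mod_mult_power_add_mult[OF p])
    moreover have "1 \<le> supp_width p C" "supp_width p C < int Q" if "b = 1"
      using C(2) that wH H(3) less.prems(2) supp_width_nonneg[OF less.prems(1)] by auto
    ultimately show ?thesis
      using card_supp_mod_mult_dilate_ge[OF _ C(1) IH] Q2 by (cases "b = 1") simp_all
  qed
qed

section \<open>Sets of density zero\<close>

definition zero_density :: "nat set \<Rightarrow> bool" where
  "zero_density A \<longleftrightarrow> (\<lambda>N. real (card (A \<inter> {1..N})) / real N) \<longlonglongrightarrow> 0"

lemma zero_densityI:
  assumes "eventually (\<lambda>N. real (card (A \<inter> {1..N})) / real N \<le> f N) sequentially"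
    and "f \<longlonglongrightarrow> 0"
  shows "zero_density A"
  unfolding zero_density_def
  by (rule tendsto_sandwich[OF _ assms(1) tendsto_const assms(2)]) simp

lemma zero_density_subset: "A \<subseteq> B \<Longrightarrow> zero_density B \<Longrightarrow> zero_density A"
  unfolding zero_density_def[of B]
  by (erule zero_densityI[rotated], intro always_eventually allI divide_right_mono)
    (auto intro: card_mono)

lemma zero_density_Un:
  assumes "zero_density A" "zero_density B"
  shows "zero_density (A \<union> B)"
proof (rule zero_densityI)
  show "(\<lambda>N. real (card (A \<inter> {1..N})) / real N + real (card (B \<inter> {1..N})) / real N) \<longlonglongrightarrow> 0"
    using tendsto_add[OF assms[unfolded zero_density_def]] by simp
  have "real (card ((A \<union> B) \<inter> {1..N})) \<le> real (card (A \<inter> {1..N})) + real (card (B \<inter> {1..N}))" for N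
    by (metis Int_Un_distrib2 card_Un_le of_nat_add of_nat_le_iff)
  then show "\<forall>\<^sub>F N in sequentially. real (card ((A \<union> B) \<inter> {1..N})) / real N
      \<le> real (card (A \<inter> {1..N})) / real N + real (card (B \<inter> {1..N})) / real N"
    by (intro always_eventually allI) (simp add: divide_right_mono flip: add_divide_distrib)
qed

lemma zero_density_UN:
  "finite I \<Longrightarrow> (\<And>i. i \<in> I \<Longrightarrow> zero_density (A i)) \<Longrightarrow> zero_density (\<Union>i\<in>I. A i)"
proof (induction I rule: finite_induct)
  case empty
  show ?case by (simp add: zero_density_def)
qed (simp add: zero_density_Un)

lemma zero_density_finite:
  assumes "finite A"
  shows "zero_density A"
proof (rule zero_densityI)
  show "(\<lambda>N. real (card A) / real N) \<longlonglongrightarrow> 0"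
    by (rule lim_const_over_n)
  show "\<forall>\<^sub>F N in sequentially. real (card (A \<inter> {1..N})) / real N \<le> real (card A) / real N"
    using assms by (intro always_eventually allI divide_right_mono) (simp_all add: card_mono)
qed

lemma cesaro_density_one_iff_zero_density:
  "cesaro_density_one J \<longleftrightarrow> zero_density (- J)"
proof -
  let ?d = "\<lambda>N. real (card (- J \<inter> {1..N})) / real N"
  have "real (card (J \<inter> {1..N})) / real N = 1 - ?d N" if "N \<ge> 1" for N
  proof -
    have "card (J \<inter> {1..N}) + card (- J \<inter> {1..N}) = N"
      by (subst card_Un_disjoint[symmetric]) (auto simp: Int_Un_distrib2[symmetric])
    then show ?thesis
      using that by (simp add: field_simps flip: of_nat_add)
  qed
  then have "cesaro_density_one J \<longleftrightarrow> (\<lambda>N. 1 - ?d N) \<longlonglongrightarrow> 1"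
    unfolding cesaro_density_one_def
    by (intro tendsto_cong) (auto intro: eventually_sequentiallyI[of 1])
  also have "\<dots> \<longleftrightarrow> ?d \<longlonglongrightarrow> 0"
    using LIM_zero_iff[of "\<lambda>N. 1 - ?d N" 1 sequentially] tendsto_minus_cancel_left[of ?d 0]
    by simp
  finally show ?thesis
    unfolding zero_density_def .
qed

definition count_few_ones :: "nat \<Rightarrow> nat \<Rightarrow> nat \<Rightarrow> nat" where
  "count_few_ones Q B k = card {j. j < Q ^ B \<and> ones_digits Q j \<le> k}"

lemma few_ones_below_power_Suc_eq:
  assumes Q: "Q \<ge> 2"
  shows "{j. j < Q ^ Suc B \<and> ones_digits Q j \<le> k} =
    (\<Union>b<Q. (\<lambda>j'. b + Q * j') ` {j'. j' < Q ^ B \<and> of_bool (b = 1) + ones_digits Q j' \<le> k})"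
    (is "?L = (\<Union>b<Q. (\<lambda>j'. b + Q * j') ` ?S b)")
proof (intro equalityI subsetI)
  fix j assume j: "j \<in> ?L"
  have "j div Q < Q ^ B"
    using j Q by (simp add: less_mult_imp_div_less mult.commute)
  moreover have "ones_digits Q j = of_bool (j mod Q = 1) + ones_digits Q (j div Q)"
    using ones_digits_add_mult[OF Q, of "j mod Q" "j div Q"] Q by simp
  ultimately have "j div Q \<in> ?S (j mod Q)"
    using j by simp
  moreover have "j = j mod Q + Q * (j div Q)" "j mod Q < Q"
    using Q by simp_all
  ultimately show "j \<in> (\<Union>b<Q. (\<lambda>j'. b + Q * j') ` ?S b)"
    by blast
next
  fix j assume "j \<in> (\<Union>b<Q. (\<lambda>j'. b + Q * j') ` ?S b)"
  then obtain b j' where b: "b < Q" and j': "j' \<in> ?S b" and j: "j = b + Q * j'"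
    by auto
  have "b + Q * j' < Q * (j' + 1)"
    using b by simp
  also have "\<dots> \<le> Q * Q ^ B"
    using j' by (intro mult_left_mono) auto
  finally show "j \<in> ?L"
    using ones_digits_add_mult[OF Q b, of j'] j' j by simp
qed

lemma count_few_ones_Suc_le:
  assumes Q: "Q \<ge> 2"
  shows "count_few_ones Q (Suc B) k \<le> (Q - 1) * count_few_ones Q B k + (if k = 0 then 0 else count_few_ones Q B (k - 1))"
proof -
  let ?S = "\<lambda>b. {j'. j' < Q ^ B \<and> of_bool (b = 1) + ones_digits Q j' \<le> k}"
  let ?shift = "\<lambda>b j'. b + Q * j'"
  have disjoint: "?shift b ` ?S b \<inter> ?shift b' ` ?S b' = {}" if "b < Q" "b' < Q" "b \<noteq> b'" for b b'
  proof -
    have "b + Q * x \<noteq> b' + Q * y" for x y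
    proof
      assume "b + Q * x = b' + Q * y"
      then have "(b + Q * x) mod Q = (b' + Q * y) mod Q"
        by simp
      then show False
        using that by simp
    qed
    then show ?thesis
      by blast
  qed
  have "count_few_ones Q (Suc B) k = (\<Sum>b<Q. card (?shift b ` ?S b))"
    unfolding count_few_ones_def few_ones_below_power_Suc_eq[OF Q] using disjoint by (intro card_UN_disjoint) auto
  also have "\<dots> = (\<Sum>b<Q. card (?S b))"
    using Q by (intro sum.cong refl card_image) (auto simp: inj_on_def)
  also have "\<dots> = (\<Sum>b\<in>{..<Q} - {1}. card (?S b)) + card (?S 1)"
    using Q by (subst sum.remove[of _ 1]) auto
  also have "(\<Sum>b\<in>{..<Q} - {1}. card (?S b)) = (Q - 1) * count_few_ones Q B k"
    using Q by (simp add: count_few_ones_def)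
  also have "card (?S 1) = (if k = 0 then 0 else count_few_ones Q B (k - 1))"
    by (auto simp: count_few_ones_def le_diff_conv2 Suc_le_eq)
  finally show ?thesis
    by simp
qed

lemma count_few_ones_le:
  assumes Q: "Q \<ge> 2"
  shows "count_few_ones Q B k \<le> (B + 1) ^ k * (Q - 1) ^ B"
proof (induction B arbitrary: k)
  case 0
  have "{j. j < Q ^ 0 \<and> ones_digits Q j \<le> k} = {0}"
    by auto
  then show ?case
    by (simp add: count_few_ones_def)
next
  case (Suc B)
  define q where "q = Q - 1"
  have q: "q \<ge> 1"
    using Q by (simp add: q_def)
  show ?case
  proof (cases "k = 0")
    case True
    then show ?thesis
      using count_few_ones_Suc_le[OF Q, of B k] Suc[of k] by (simp add: mult.commute mult_le_mono2 le_trans)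
  next
    case False
    have "count_few_ones Q (Suc B) k \<le> q * ((B + 1) ^ k * q ^ B) + (B + 1) ^ (k - 1) * q ^ B"
      using count_few_ones_Suc_le[OF Q, of B k] Suc[of k] Suc[of "k - 1"] False
      unfolding q_def by (auto intro: order.trans add_mono mult_left_mono)
    also have "\<dots> \<le> ((B + 1) ^ k + (B + 1) ^ (k - 1)) * q ^ Suc B"
      using q by (simp add: algebra_simps)
    also have "(B + 1) ^ k + (B + 1) ^ (k - 1) \<le> (B + 2) ^ k"
    proof -
      obtain k' where k: "k = Suc k'"
        using False not0_implies_Suc by blast
      have "(B + 2) * (B + 1) ^ k' \<le> (B + 2) * (B + 2) ^ k'"
        by (intro mult_left_mono power_mono) auto
      then show ?thesis
        unfolding k by (simp add: algebra_simps)
    qed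
    finally show ?thesis
      unfolding q_def by (simp add: mult_right_mono)
  qed
qed

lemma tendsto_power_times_geometric:
  fixes r :: real
  assumes "0 < r" "r < 1"
  shows "(\<lambda>n. real (n + 1) ^ m * r ^ n) \<longlonglongrightarrow> 0"
proof (cases "m = 0")
  case True
  then show ?thesis using assms by (simp add: LIMSEQ_power_zero)
next
  case False
  define s where "s = root m r"
  have s: "0 < s" "s < 1" "s ^ m = r"
    using assms False unfolding s_def by (auto simp: real_root_lt_1_iff real_root_pow_pos)
  have "(\<lambda>n. real n * s ^ n + s ^ n) \<longlonglongrightarrow> 0 + 0"
    using powser_times_n_limit_0[of s] s by (intro tendsto_add) (simp_all add: LIMSEQ_power_zero)
  then have "(\<lambda>n. (real (n + 1) * s ^ n) ^ m) \<longlonglongrightarrow> 0 ^ m"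
    by (intro tendsto_power) (simp add: algebra_simps)
  moreover have "(real (n + 1) * s ^ n) ^ m = real (n + 1) ^ m * r ^ n" for n
    by (simp add: power_mult_distrib s(3)[symmetric] power_mult[symmetric] mult.commute)
  ultimately show ?thesis
    using False by (simp only: zero_power)
qed

text \<open>Among the numbers below \<open>Q\<^sup>B\<close>, those with at most \<open>m\<close> digits one
  are at most \<open>(B + 1)\<^sup>m (Q - 1)\<^sup>B\<close>, a vanishing fraction of \<open>Q\<^sup>B\<close>.\<close>

lemma zero_density_few_ones:
  assumes Q: "Q \<ge> 2"
  shows "zero_density {j. ones_digits Q j \<le> m}"
proof (rule zero_densityI)
  define r where "r = real (Q - 1) / real Q"
  have r: "0 < r" "r < 1"
    using Q by (auto simp: r_def)
  let ?B = "floorlog Q"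
  have "filterlim ?B at_top sequentially"
    unfolding filterlim_at_top
  proof
    fix b
    show "eventually (\<lambda>N. b \<le> ?B N) sequentially"
      using eventually_ge_at_top[of "Q ^ b"]
      by eventually_elim (use Q floorlog_ge_SucI[of Q b] in force)
  qed
  then have "(\<lambda>N. real Q * (real (?B N + 1) ^ m * r ^ ?B N)) \<longlonglongrightarrow> real Q * 0"
    by (intro tendsto_mult tendsto_const filterlim_compose[OF tendsto_power_times_geometric[OF r]])
  then show "(\<lambda>N. real Q * (real (?B N + 1) ^ m * r ^ ?B N)) \<longlonglongrightarrow> 0"
    by simp
  show "\<forall>\<^sub>F N in sequentially. real (card ({j. ones_digits Q j \<le> m} \<inter> {1..N})) / real N
      \<le> real Q * (real (?B N + 1) ^ m * r ^ ?B N)"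
  proof (rule eventually_sequentiallyI[of 1])
    fix N :: nat assume N: "N \<ge> 1"
    have B: "Q ^ (?B N - 1) \<le> N" "N < Q ^ ?B N" "?B N \<ge> 1"
      using floorlog_bounds[of N Q] N Q by (auto simp: floorlog_def)
    have "card ({j. ones_digits Q j \<le> m} \<inter> {1..N}) \<le> count_few_ones Q (?B N) m"
      unfolding count_few_ones_def using B by (intro card_mono) auto
    also have "\<dots> \<le> (?B N + 1) ^ m * (Q - 1) ^ ?B N"
      by (rule count_few_ones_le[OF Q])
    finally have count: "card ({j. ones_digits Q j \<le> m} \<inter> {1..N}) \<le> (?B N + 1) ^ m * (Q - 1) ^ ?B N" .
    have "real (card ({j. ones_digits Q j \<le> m} \<inter> {1..N})) / real N
        \<le> real ((?B N + 1) ^ m * (Q - 1) ^ ?B N) / real (Q ^ (?B N - 1))"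
      by (rule frac_le[OF _ of_nat_mono[OF count] _ of_nat_mono[OF B(1)]]) (use Q in auto)
    also have "\<dots> = real Q * (real (?B N + 1) ^ m * r ^ ?B N)"
    proof -
      obtain b where b: "?B N = Suc b"
        using B(3) not0_implies_Suc by force
      show ?thesis
        unfolding b using Q by (simp add: r_def power_divide field_simps)
    qed
    finally show "real (card ({j. ones_digits Q j \<le> m} \<inter> {1..N})) / real N
        \<le> real Q * (real (?B N + 1) ^ m * r ^ ?B N)" .
  qed
qed

text \<open>Up to \<open>N\<close>, the complement of the diagonal set lies in \<open>- T n\<close> for the
  largest \<open>n\<close> with \<open>M n \<le> N\<close>.\<close>

lemma zero_density_diagonal_set:
  fixes T :: "nat \<Rightarrow> nat set" and M :: "nat \<Rightarrow> nat"
  assumes decr: "\<And>n. T (Suc n) \<subseteq> T n" and M_ge: "\<And>n. n \<le> M n"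
    and M: "\<And>n N. M n \<le> N \<Longrightarrow> real (card (- T n \<inter> {1..N})) / real N < inverse (real (Suc n))"
  shows "zero_density (- {j. \<forall>n. M n \<le> j \<longrightarrow> j \<in> T n})"
proof (rule zero_densityI)
  define J where "J = {j. \<forall>n. M n \<le> j \<longrightarrow> j \<in> T n}"
  define level where "level N = Max {n. M n \<le> N}" for N
  have finite_level: "finite {n. M n \<le> N}" for N
    by (rule finite_subset[of _ "{..N}"]) (auto intro: order_trans[OF M_ge])
  have level: "M (level N) \<le> N" "\<And>n. M n \<le> N \<Longrightarrow> n \<le> level N" if "M 0 \<le> N" for N
  proof -
    have "level N \<in> {n. M n \<le> N}"
      unfolding level_def using that by (intro Max_in finite_level) auto
    then show "M (level N) \<le> N"
      by simp
    show "n \<le> level N" if "M n \<le> N" for n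
      unfolding level_def using that by (intro Max_ge finite_level) simp
  qed
  have T_antimono: "m \<le> n \<Longrightarrow> T n \<subseteq> T m" for m n
    using lift_Suc_antimono_le[of T, OF decr] by blast
  show "\<forall>\<^sub>F N in sequentially. real (card (- J \<inter> {1..N})) / real N \<le> inverse (real (Suc (level N)))"
  proof (rule eventually_sequentiallyI[of "M 0"])
    fix N assume N: "M 0 \<le> N"
    have "- J \<inter> {1..N} \<subseteq> - T (level N) \<inter> {1..N}"
    proof
      fix j assume j: "j \<in> - J \<inter> {1..N}"
      then obtain n where n: "M n \<le> j" "j \<notin> T n"
        by (auto simp: J_def)
      then have "n \<le> level N"
        using j level(2)[OF N, of n] by simp
      then show "j \<in> - T (level N) \<inter> {1..N}"
        using j n(2) T_antimono by blast
    qed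
    then have "real (card (- J \<inter> {1..N})) / real N \<le> real (card (- T (level N) \<inter> {1..N})) / real N"
      by (intro divide_right_mono) (auto intro: card_mono)
    also have "\<dots> < inverse (real (Suc (level N)))"
      using level(1)[OF N] by (rule M)
    finally show "real (card (- J \<inter> {1..N})) / real N \<le> inverse (real (Suc (level N)))"
      by simp
  qed
  have "filterlim level at_top sequentially"
    unfolding filterlim_at_top
  proof
    fix n
    show "eventually (\<lambda>N. n \<le> level N) sequentially"
      using eventually_ge_at_top[of "max (M 0) (M n)"] by eventually_elim (simp add: level(2))
  qed
  then show "(\<lambda>N. inverse (real (Suc (level N)))) \<longlonglongrightarrow> 0"
    by (rule filterlim_compose[OF LIMSEQ_inverse_real_of_nat])
qed

lemma zero_density_diagonal:
  fixes T :: "nat \<Rightarrow> nat set"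
  assumes zero: "\<And>n. zero_density (- T n)" and decr: "\<And>n. T (Suc n) \<subseteq> T n"
  shows "\<exists>J. zero_density (- J) \<and> (\<forall>n. finite (J - T n))"
proof -
  have "\<forall>n. \<exists>N0. \<forall>N\<ge>N0. real (card (- T n \<inter> {1..N})) / real N < inverse (real (Suc n))"
  proof
    fix n
    show "\<exists>N0. \<forall>N\<ge>N0. real (card (- T n \<inter> {1..N})) / real N < inverse (real (Suc n))"
      using order_tendstoD(2)[OF zero[of n, unfolded zero_density_def], of "inverse (real (Suc n))"]
      by (simp add: eventually_sequentially)
  qed
  from choice[OF this] obtain N0
    where N0: "\<And>n N. N \<ge> N0 n \<Longrightarrow> real (card (- T n \<inter> {1..N})) / real N < inverse (real (Suc n))"
    by blast
  define M where "M n = N0 n + n" for n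
  have "real (card (- T n \<inter> {1..N})) / real N < inverse (real (Suc n))" if "M n \<le> N" for n N
    using that by (intro N0) (simp add: M_def)
  then have "zero_density (- {j. \<forall>n. M n \<le> j \<longrightarrow> j \<in> T n})"
    by (intro zero_density_diagonal_set[where T=T, OF decr]) (simp_all add: M_def)
  moreover have "finite ({j. \<forall>n. M n \<le> j \<longrightarrow> j \<in> T n} - T n)" for n
    by (rule finite_subset[of _ "{..<M n}"]) (auto simp: not_le)
  ultimately show ?thesis
    by blast
qed

lemma exists_density_one_ones_digits_tendsto:
  "\<exists>J. J \<subseteq> {1..} \<and> cesaro_density_one J \<and>
    (\<forall>Q\<ge>2. filterlim (ones_digits Q) at_top (sequentially \<sqinter> principal J))"
proof -
  define T where "T n = {j. \<forall>Q\<in>{2..n + 2}. n \<le> ones_digits Q j}" for n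
  have "zero_density (- T n)" for n
  proof (rule zero_density_subset)
    show "- T n \<subseteq> (\<Union>Q\<in>{2..n + 2}. {j. ones_digits Q j \<le> n})"
      by (auto simp: T_def)
    show "zero_density (\<Union>Q\<in>{2..n + 2}. {j. ones_digits Q j \<le> n})"
      by (intro zero_density_UN zero_density_few_ones) auto
  qed
  moreover have "T (Suc n) \<subseteq> T n" for n
    by (force simp: T_def)
  ultimately obtain J0 where J0: "zero_density (- J0)" "\<And>n. finite (J0 - T n)"
    using zero_density_diagonal[of T] by blast
  define J where "J = J0 \<inter> {1..}"
  have "- J = - J0 \<union> {0}"
    by (auto simp: J_def)
  then have "cesaro_density_one J"
    unfolding cesaro_density_one_iff_zero_density
    using zero_density_Un[OF J0(1) zero_density_finite[of "{0}"]] by simp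
  moreover have "filterlim (ones_digits Q) at_top (sequentially \<sqinter> principal J)" if Q: "Q \<ge> 2" for Q
    unfolding filterlim_at_top
  proof
    fix M
    have "J - {j. M \<le> ones_digits Q j} \<subseteq> J0 - T (max Q M)"
      using Q by (auto simp: J_def T_def)
    then have "finite {j. \<not> (j \<in> J \<longrightarrow> M \<le> ones_digits Q j)}"
      using J0(2) by (auto intro: finite_subset)
    then show "eventually (\<lambda>j. M \<le> ones_digits Q j) (sequentially \<sqinter> principal J)"
      unfolding eventually_inf_principal by (simp add: cofinite_eq_sequentially[symmetric] eventually_cofinite)
  qed
  ultimately show ?thesis
    by (intro exI[of _ J] conjI) (simp_all add: J_def)
qed

text \<open>Off a set of density zero the terms are eventually close to \<open>L\<close>, and
  bounded terms on a set of density zero do not affect the mean.\<close>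

lemma cesaro_mean_tendsto:
  fixes a :: "nat \<Rightarrow> real"
  assumes J: "cesaro_density_one J" and bound: "\<And>n. \<bar>a n\<bar> \<le> B"
    and lim: "(a \<longlongrightarrow> L) (sequentially \<sqinter> principal J)"
  shows "(\<lambda>N. (\<Sum>n=1..N. a n) / real N) \<longlonglongrightarrow> L"
proof (rule tendstoI)
  fix \<epsilon> :: real assume \<epsilon>: "\<epsilon> > 0"
  define C where "C = B + \<bar>L\<bar>"
  have C: "\<bar>a n - L\<bar> \<le> C" for n
    using abs_triangle_ineq4[of "a n" L] bound[of n] unfolding C_def by linarith
  obtain N1 where N1: "\<And>n. N1 \<le> n \<Longrightarrow> n \<in> J \<Longrightarrow> \<bar>a n - L\<bar> < \<epsilon> / 2"
    using tendstoD[OF lim, of "\<epsilon> / 2"] \<epsilon>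
    unfolding eventually_inf_principal eventually_sequentially dist_real_def by auto
  define E where "E = - J \<union> {..<N1}"
  have "zero_density E"
    unfolding E_def using J
    by (intro zero_density_Un) (simp_all add: cesaro_density_one_iff_zero_density zero_density_finite)
  then have "(\<lambda>N. C * (real (card (E \<inter> {1..N})) / real N)) \<longlonglongrightarrow> C * 0"
    unfolding zero_density_def by (intro tendsto_mult tendsto_const)
  then have small: "eventually (\<lambda>N. C * (real (card (E \<inter> {1..N})) / real N) < \<epsilon> / 2) sequentially"
    using \<epsilon> by (intro order_tendstoD(2)) auto
  have mean: "\<bar>(\<Sum>n=1..N. a n) / real N - L\<bar> \<le> \<epsilon> / 2 + C * (real (card (E \<inter> {1..N})) / real N)"
    if N: "N \<ge> 1" for N
  proof -
    have pointwise: "\<bar>a n - L\<bar> \<le> \<epsilon> / 2 + C * indicator E n" for n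
      using N1[of n] C[of n] \<epsilon> by (cases "n \<in> E") (auto simp: E_def)
    have "(\<Sum>n=1..N. a n) / real N - L = (\<Sum>n=1..N. a n - L) / real N"
      using N by (simp add: sum_subtractf field_simps)
    then have "\<bar>(\<Sum>n=1..N. a n) / real N - L\<bar> \<le> (\<Sum>n=1..N. \<bar>a n - L\<bar>) / real N"
      by (simp add: divide_right_mono sum_abs)
    also have "\<dots> \<le> (\<Sum>n=1..N. \<epsilon> / 2 + C * indicator E n) / real N"
      by (intro divide_right_mono sum_mono pointwise) simp
    also have "(\<Sum>n=1..N. \<epsilon> / 2 + C * indicator E n) = real N * (\<epsilon> / 2) + C * real (card (E \<inter> {1..N}))"
      using sum_of_bool_eq[of "{1..N}" "\<lambda>n. n \<in> E"]
      by (simp add: sum.distrib sum_distrib_left[symmetric] indicator_def Int_commute)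
    also have "\<dots> / real N = \<epsilon> / 2 + C * (real (card (E \<inter> {1..N})) / real N)"
      using N by (simp add: field_simps)
    finally show ?thesis .
  qed
  show "eventually (\<lambda>N. dist ((\<Sum>n=1..N. a n) / real N) L < \<epsilon>) sequentially"
    using small eventually_ge_at_top[of 1]
  proof eventually_elim
    case (elim N)
    then show ?case
      using mean[of N] unfolding dist_real_def by linarith
  qed
qed

section \<open>Characters and the dual automaton\<close>

definition root_unity :: "nat \<Rightarrow> int \<Rightarrow> complex" where
  "root_unity p x = cis (2 * pi * of_int x / real p)"

lemma root_unity_add: "root_unity p (x + y) = root_unity p x * root_unity p y"
  unfolding root_unity_def by (simp add: cis_mult add_divide_distrib distrib_left)

lemma root_unity_0 [simp]: "root_unity p 0 = 1"
  unfolding root_unity_def by simp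

lemma root_unity_mult_self:
  assumes "p > 0"
  shows "root_unity p (int p * q) = 1"
proof -
  have "2 * pi * of_int (int p * q) / real p = 2 * pi * of_int q"
    using assms by simp
  then show ?thesis
    unfolding root_unity_def by (simp add: cis_multiple_2pi)
qed

lemma root_unity_mod:
  assumes "p > 0"
  shows "root_unity p (x mod int p) = root_unity p x"
proof -
  have "root_unity p x = root_unity p (x mod int p + int p * (x div int p))"
    by simp
  then show ?thesis
    using assms by (simp only: root_unity_add root_unity_mult_self) simp
qed

lemma root_unity_sum: "finite S \<Longrightarrow> root_unity p (\<Sum>i\<in>S. g i) = (\<Prod>i\<in>S. root_unity p (g i))"
  by (induction S rule: finite_induct) (simp_all add: root_unity_add)

lemma cnj_root_unity_mult: "cnj (root_unity p x) * root_unity p y = root_unity p (y - x)"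
  unfolding root_unity_def by (simp add: cis_cnj cis_mult diff_divide_distrib algebra_simps)

lemma sum_root_unity:
  assumes p: "p > 0"
  shows "(\<Sum>s<p. root_unity p (int s * d)) = (if int p dvd d then of_nat p else 0)"
proof -
  let ?z = "root_unity p d"
  have power: "root_unity p (int s * d) = ?z ^ s" for s
  proof -
    have "?z ^ s = cis (real s * (2 * pi * of_int d / real p))"
      unfolding root_unity_def by (rule Complex.DeMoivre)
    also have "real s * (2 * pi * of_int d / real p) = 2 * pi * of_int (int s * d) / real p"
      by (simp add: divide_inverse mult_ac)
    finally show ?thesis
      unfolding root_unity_def by simp
  qed
  show ?thesis
  proof (cases "int p dvd d")
    case True
    then have "?z = 1"
      using root_unity_mult_self[OF p] by auto
    then show ?thesis
      using True by (simp add: power)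
  next
    case False
    have "?z \<noteq> 1"
    proof
      assume "?z = 1"
      then have "cos (2 * pi * of_int d / real p) = 1"
        unfolding root_unity_def by (metis cis.sel(1) one_complex.sel(1))
      then obtain n :: int where "2 * pi * of_int d / real p = of_int n * 2 * pi"
        using cos_one_2pi_int by blast
      then have "of_int d = real p * of_int n"
        using p by (simp add: field_simps)
      then have "d = int p * n"
        by (metis of_int_eq_iff of_int_mult of_int_of_nat_eq)
      then show False
        using False by simp
    qed
    moreover have "?z ^ p = 1"
      using power[of p] root_unity_mult_self[OF p, of d] by simp
    ultimately show ?thesis
      using False by (simp add: power geometric_sum)
  qed
qed

lemma character_eq_root_unity:
  assumes "finite {n. k n \<noteq> 0}"
  shows "character p k a = root_unity p (int (\<Sum>n\<in>{n. k n \<noteq> 0}. k n * a n))"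
proof -
  have "root_unity p (int (\<Sum>n\<in>{n. k n \<noteq> 0}. k n * a n))
      = (\<Prod>n\<in>{n. k n \<noteq> 0}. root_unity p (int (k n * a n)))"
    unfolding of_nat_sum by (rule root_unity_sum[OF assms])
  then show ?thesis
    unfolding character_def root_unity_def by (simp only: of_int_of_nat_eq)
qed

lemma character_eq_root_unity_mod:
  assumes "p > 0" "finite {n. k n \<noteq> 0}"
    and "(\<Sum>n\<in>{n. k n \<noteq> 0}. k n * a n) mod p = X mod p"
  shows "character p k a = root_unity p (int X)"
proof -
  have "int (\<Sum>n\<in>{n. k n \<noteq> 0}. k n * a n) mod int p = int X mod int p"
    using assms(3) by (metis of_nat_mod)
  then show ?thesis
    unfolding character_eq_root_unity[OF assms(2)] by (metis root_unity_mod[OF assms(1)])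
qed

lemma norm_character: "norm (character p k a) = 1"
  unfolding character_def by (simp add: prod_norm[symmetric])

lemma character_zero [simp]: "character p (\<lambda>_. 0) a = 1"
  unfolding character_def by simp

text \<open>The dual automaton acts on character indices: \<open>\<chi>\<^sub>k \<circ> F = \<chi>\<^sub>F\<^sub>* \<^sub>k\<close>.\<close>

definition dual_lca :: "nat \<Rightarrow> ((int ^ 'd) \<Rightarrow> nat) \<Rightarrow> ((int ^ 'd) \<Rightarrow> nat) \<Rightarrow> ((int ^ 'd) \<Rightarrow> nat)" where
  "dual_lca p f k = (\<lambda>m. (\<Sum>u\<in>{u. f u \<noteq> 0}. f u * k (m - u)) mod p)"

lemma dual_lca_zero: "(dual_lca p f ^^ j) (\<lambda>_. 0) = (\<lambda>_. 0)"
  by (induction j) (simp_all add: dual_lca_def)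

lemma dual_lca_less: "p > 0 \<Longrightarrow> dual_lca p f k m < p"
  unfolding dual_lca_def by simp

lemma support_dual_lca:
  "{m. dual_lca p f k m \<noteq> 0} \<subseteq> (\<lambda>(n, u). n + u) ` ({n. k n \<noteq> 0} \<times> {u. f u \<noteq> 0})"
proof
  fix m assume "m \<in> {m. dual_lca p f k m \<noteq> 0}"
  then have "(\<Sum>u\<in>{u. f u \<noteq> 0}. f u * k (m - u)) mod p \<noteq> 0"
    by (simp add: dual_lca_def)
  then have "(\<Sum>u\<in>{u. f u \<noteq> 0}. f u * k (m - u)) \<noteq> 0"
    by (metis mod_0)
  then obtain u where "u \<in> {u. f u \<noteq> 0}" "f u * k (m - u) \<noteq> 0"
    by (rule sum.not_neutral_contains_not_neutral)
  then show "m \<in> (\<lambda>(n, u). n + u) ` ({n. k n \<noteq> 0} \<times> {u. f u \<noteq> 0})"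
    by (intro image_eqI[of _ _ "(m - u, u)"]) auto
qed

lemma finite_support_dual_lca_iterate:
  assumes "finite {u. f u \<noteq> 0}" "finite {n. k n \<noteq> 0}"
  shows "finite {m. (dual_lca p f ^^ j) k m \<noteq> 0}"
proof (induction j)
  case 0
  then show ?case using assms(2) by simp
next
  case (Suc j)
  show ?case
    by (simp only: funpow.simps comp_apply)
      (rule finite_subset[OF support_dual_lca], use Suc assms(1) in simp)
qed

lemma char_index_dual_lca_iterate:
  assumes "p > 0" "finite {u. f u \<noteq> 0}" "char_index p k"
  shows "char_index p ((dual_lca p f ^^ j) k)"
proof -
  have "finite {n. (dual_lca p f ^^ j) k n \<noteq> 0}"
    using assms(3) unfolding char_index_def by (intro finite_support_dual_lca_iterate[OF assms(2)]) simp
  moreover have "(dual_lca p f ^^ j) k n < p" for n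
    using assms(3) dual_lca_less[OF assms(1)] unfolding char_index_def by (cases j) auto
  ultimately show ?thesis
    unfolding char_index_def by blast
qed

lemma sum_lca_eq_sum_dual:
  fixes f k :: "(int ^ 'd) \<Rightarrow> nat"
  defines "T \<equiv> (\<lambda>(n, u). n + u) ` ({n. k n \<noteq> 0} \<times> {u. f u \<noteq> 0})"
  assumes fS: "finite {u. f u \<noteq> 0}" and kS: "finite {n. k n \<noteq> 0}"
  shows "(\<Sum>n | k n \<noteq> 0. k n * (\<Sum>u | f u \<noteq> 0. f u * a (u + n)))
    = (\<Sum>m\<in>T. (\<Sum>u | f u \<noteq> 0. f u * k (m - u)) * a m)"
proof -
  have "(\<Sum>m\<in>T. (\<Sum>u | f u \<noteq> 0. f u * k (m - u)) * a m) = (\<Sum>u | f u \<noteq> 0. \<Sum>m\<in>T. f u * k (m - u) * a m)"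
    by (simp add: sum_distrib_right sum.swap[of _ T])
  also have "\<dots> = (\<Sum>u | f u \<noteq> 0. \<Sum>n | k n \<noteq> 0. k n * f u * a (u + n))"
  proof (rule sum.cong[OF refl])
    fix u assume u: "u \<in> {u. f u \<noteq> 0}"
    have "k (m - u) = 0" if "m \<notin> (\<lambda>n. n + u) ` {n. k n \<noteq> 0}" for m
      using that by (metis (mono_tags) diff_add_cancel image_eqI mem_Collect_eq)
    then have "(\<Sum>m\<in>T. f u * k (m - u) * a m) = (\<Sum>m\<in>(\<lambda>n. n + u) ` {n. k n \<noteq> 0}. f u * k (m - u) * a m)"
      using fS kS u by (intro sum.mono_neutral_right) (auto simp: T_def)
    also have "\<dots> = (\<Sum>n | k n \<noteq> 0. k n * f u * a (u + n))"
      by (subst sum.reindex) (auto simp: inj_on_def add.commute mult_ac)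
    finally show "(\<Sum>m\<in>T. f u * k (m - u) * a m) = (\<Sum>n | k n \<noteq> 0. k n * f u * a (u + n))" .
  qed
  also have "\<dots> = (\<Sum>n | k n \<noteq> 0. \<Sum>u | f u \<noteq> 0. k n * f u * a (u + n))"
    by (rule sum.swap)
  also have "\<dots> = (\<Sum>n | k n \<noteq> 0. k n * (\<Sum>u | f u \<noteq> 0. f u * a (u + n)))"
    by (simp add: sum_distrib_left mult_ac)
  finally show ?thesis ..
qed

lemma character_lca:
  fixes f k :: "(int ^ 'd) \<Rightarrow> nat"
  assumes p: "p > 0" and fS: "finite {u. f u \<noteq> 0}" and kS: "finite {n. k n \<noteq> 0}"
  shows "character p k (lca p f a) = character p (dual_lca p f k) a"
proof -
  let ?T = "(\<lambda>(n, u). n + u) ` ({n. k n \<noteq> 0} \<times> {u. f u \<noteq> 0})"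
  let ?Z = "\<lambda>m. \<Sum>u | f u \<noteq> 0. f u * k (m - u)"
  let ?X = "\<Sum>m\<in>?T. ?Z m * a m"
  have "character p k (lca p f a) = root_unity p (int ?X)"
  proof (rule character_eq_root_unity_mod[OF p kS])
    have "(\<Sum>n | k n \<noteq> 0. k n * lca p f a n) mod p = (\<Sum>n | k n \<noteq> 0. (k n * lca p f a n) mod p) mod p"
      by (rule mod_sum_eq[symmetric])
    also have "\<dots> = (\<Sum>n | k n \<noteq> 0. (k n * (\<Sum>u | f u \<noteq> 0. f u * a (u + n))) mod p) mod p"
      unfolding lca_def by (simp add: mod_mult_right_eq)
    also have "\<dots> = ?X mod p"
      unfolding mod_sum_eq sum_lca_eq_sum_dual[OF fS kS] ..
    finally show "(\<Sum>n | k n \<noteq> 0. k n * lca p f a n) mod p = ?X mod p" .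
  qed
  also have "\<dots> = character p (dual_lca p f k) a"
  proof (rule character_eq_root_unity_mod[symmetric, OF p])
    show "finite {m. dual_lca p f k m \<noteq> 0}"
      using fS kS by (intro finite_subset[OF support_dual_lca]) simp
    have "(\<Sum>m | dual_lca p f k m \<noteq> 0. dual_lca p f k m * a m) = (\<Sum>m\<in>?T. dual_lca p f k m * a m)"
      using support_dual_lca[of p f k] fS kS by (intro sum.mono_neutral_left) auto
    then have "(\<Sum>m | dual_lca p f k m \<noteq> 0. dual_lca p f k m * a m) mod p = (\<Sum>m\<in>?T. dual_lca p f k m * a m) mod p"
      by simp
    also have "(\<Sum>m\<in>?T. dual_lca p f k m * a m) mod p = (\<Sum>m\<in>?T. dual_lca p f k m * a m mod p) mod p"
      by (rule mod_sum_eq[symmetric])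
    also have "\<dots> = (\<Sum>m\<in>?T. ?Z m * a m mod p) mod p"
      unfolding dual_lca_def by (simp add: mod_mult_left_eq)
    also have "\<dots> = ?X mod p"
      by (rule mod_sum_eq)
    finally show "(\<Sum>m | dual_lca p f k m \<noteq> 0. dual_lca p f k m * a m) mod p = ?X mod p" .
  qed
  finally show ?thesis .
qed

lemma character_lca_iterate:
  assumes p: "p > 0" and fS: "finite {u. f u \<noteq> 0}" and kS: "finite {n. k n \<noteq> 0}"
  shows "character p k ((lca p f ^^ j) a) = character p ((dual_lca p f ^^ j) k) a"
proof (induction j arbitrary: a)
  case 0
  then show ?case by simp
next
  case (Suc j)
  have "character p k ((lca p f ^^ Suc j) a) = character p ((dual_lca p f ^^ j) k) (lca p f a)"
    using Suc by (simp add: funpow_Suc_right del: funpow.simps)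
  also have "\<dots> = character p (dual_lca p f ((dual_lca p f ^^ j) k)) a"
    by (rule character_lca[OF p fS finite_support_dual_lca_iterate[OF fS kS]])
  finally show ?case
    by simp
qed

section \<open>The rank of iterated characters\<close>

definition poly_of :: "('g \<Rightarrow> nat) \<Rightarrow> ('g \<Rightarrow>\<^sub>0 int)" where
  "poly_of k = Abs_poly_mapping (\<lambda>n. int (k n))"

lemma lookup_poly_of: "finite {n. k n \<noteq> 0} \<Longrightarrow> Poly_Mapping.lookup (poly_of k) n = int (k n)"
  unfolding poly_of_def by (subst lookup_Abs_poly_mapping) auto

lemma keys_poly_of: "finite {n. k n \<noteq> 0} \<Longrightarrow> Poly_Mapping.keys (poly_of k) = {n. k n \<noteq> 0}"
  by (auto simp: in_keys_iff lookup_poly_of)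

lemma dual_lca_iterate_eq_mod:
  assumes p: "p > 0" and fS: "finite {u. f u \<noteq> 0}" and kS: "finite {n. k n \<noteq> 0}"
    and kp: "\<forall>n. k n < p"
  shows "int ((dual_lca p f ^^ j) k m) = Poly_Mapping.lookup (poly_of k * poly_of f ^ j) m mod int p"
proof (induction j arbitrary: m)
  case 0
  then show ?case using kp lookup_poly_of[OF kS] by simp
next
  case (Suc j)
  let ?X = "poly_of k * poly_of f ^ j"
  have "int ((dual_lca p f ^^ Suc j) k m)
      = (\<Sum>u | f u \<noteq> 0. int (f u) * int ((dual_lca p f ^^ j) k (m - u))) mod int p"
    by (simp add: dual_lca_def of_nat_mod)
  also have "\<dots> = (\<Sum>u | f u \<noteq> 0. int (f u) * (Poly_Mapping.lookup ?X (m - u) mod int p)) mod int p"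
    by (simp only: Suc)
  also have "\<dots> = (\<Sum>u | f u \<noteq> 0. int (f u) * (Poly_Mapping.lookup ?X (m - u) mod int p) mod int p) mod int p"
    by (rule mod_sum_eq[symmetric])
  also have "\<dots> = (\<Sum>u | f u \<noteq> 0. int (f u) * Poly_Mapping.lookup ?X (m - u) mod int p) mod int p"
    by (simp add: mod_mult_right_eq)
  also have "\<dots> = (\<Sum>u | f u \<noteq> 0. int (f u) * Poly_Mapping.lookup ?X (m - u)) mod int p"
    by (rule mod_sum_eq)
  also have "(\<Sum>u | f u \<noteq> 0. int (f u) * Poly_Mapping.lookup ?X (m - u)) = Poly_Mapping.lookup (poly_of f * ?X) m"
    by (simp add: lookup_mult_keys keys_poly_of[OF fS] lookup_poly_of[OF fS])
  also have "poly_of f * ?X = poly_of k * poly_of f ^ Suc j"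
    by (simp add: mult_ac)
  finally show ?case .
qed

lemma char_rank_dual_lca_iterate:
  assumes "p > 0" "finite {u. f u \<noteq> 0}" "finite {n. k n \<noteq> 0}" "\<forall>n. k n < p"
  shows "char_rank ((dual_lca p f ^^ j) k) = card (supp_mod p (poly_of k * poly_of f ^ j))"
proof -
  have "(dual_lca p f ^^ j) k m \<noteq> 0 \<longleftrightarrow> int ((dual_lca p f ^^ j) k m) \<noteq> 0" for m
    by simp
  also have "\<dots> m \<longleftrightarrow> m \<in> supp_mod p (poly_of k * poly_of f ^ j)" for m
    unfolding dual_lca_iterate_eq_mod[OF assms] by (simp add: supp_mod_def dvd_eq_mod_eq_0)
  finally have "(dual_lca p f ^^ j) k m \<noteq> 0 \<longleftrightarrow> m \<in> supp_mod p (poly_of k * poly_of f ^ j)" for m .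
  then have "{m. (dual_lca p f ^^ j) k m \<noteq> 0} = supp_mod p (poly_of k * poly_of f ^ j)"
    by blast
  then show ?thesis
    unfolding char_rank_def by simp
qed

lemma sum_digits_eq_0_imp:
  fixes w :: "nat \<Rightarrow> int"
  assumes "B > 0" "\<forall>i<n. \<bar>w i\<bar> < B" "(\<Sum>i<n. w i * B ^ i) = 0"
  shows "\<forall>i<n. w i = 0"
  using assms(2,3)
proof (induction n arbitrary: w)
  case 0
  then show ?case by simp
next
  case (Suc n)
  define R where "R = (\<Sum>i<n. w (Suc i) * B ^ i)"
  have "(\<Sum>i<Suc n. w i * B ^ i) = w 0 + B * R"
    unfolding R_def sum.lessThan_Suc_shift sum_distrib_left by (simp add: mult_ac)
  then have eq: "w 0 = - (B * R)"
    using Suc.prems(2) by simp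
  have "w 0 = 0"
  proof (rule ccontr)
    assume "w 0 \<noteq> 0"
    moreover have "B dvd w 0"
      using eq by simp
    ultimately have "B \<le> \<bar>w 0\<bar>"
      using dvd_imp_le_int[of "w 0" B] assms(1) by simp
    then show False
      using Suc.prems(1)[rule_format, of 0] by simp
  qed
  then have "R = 0"
    using eq assms(1) by simp
  moreover have "\<forall>i<n. \<bar>w (Suc i)\<bar> < B"
    using Suc.prems(1) by simp
  ultimately have "\<forall>i<n. w (Suc i) = 0"
    using Suc.IH[of "\<lambda>i. w (Suc i)"] unfolding R_def by blast
  then show ?case
    using \<open>w 0 = 0\<close> by (auto simp: less_Suc_eq_0_disj)
qed

lemma inj_on_digit_expansion:
  fixes T0 :: "(int ^ 'd) set" and h :: "nat \<Rightarrow> 'd"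
  assumes h: "bij_betw h {..<CARD('d)} UNIV" and B: "\<And>u i. u \<in> T0 \<Longrightarrow> 2 * \<bar>u $ i\<bar> < B"
  shows "inj_on (\<lambda>u. \<Sum>i<CARD('d). u $ h i * B ^ i) T0"
proof (rule inj_onI)
  fix u v assume u: "u \<in> T0" and v: "v \<in> T0"
    and eq: "(\<Sum>i<CARD('d). u $ h i * B ^ i) = (\<Sum>i<CARD('d). v $ h i * B ^ i)"
  have "\<forall>i<CARD('d). u $ h i - v $ h i = 0"
  proof (rule sum_digits_eq_0_imp)
    show "B > 0"
      using B[OF u, of undefined] by linarith
    show "\<forall>i<CARD('d). \<bar>u $ h i - v $ h i\<bar> < B"
      using B[OF u] B[OF v] abs_triangle_ineq4 by (smt (verit))
    show "(\<Sum>i<CARD('d). (u $ h i - v $ h i) * B ^ i) = 0"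
      using eq by (simp add: left_diff_distrib sum_subtractf)
  qed
  then show "u = v"
    using h unfolding vec_eq_iff bij_betw_def by (metis UNIV_I imageE lessThan_iff eq_iff_diff_eq_0)
qed

text \<open>Reading the coordinates as digits in a base larger than twice every
  coordinate in \<open>T\<^sub>0\<close>.\<close>

lemma exists_additive_inj_on:
  fixes T0 :: "(int ^ 'd) set"
  assumes "finite T0"
  shows "\<exists>\<psi> :: (int ^ 'd) \<Rightarrow> int. (\<forall>x y. \<psi> (x + y) = \<psi> x + \<psi> y) \<and> \<psi> 0 = 0 \<and> inj_on \<psi> T0"
proof -
  obtain h where h: "bij_betw h {..<CARD('d)} (UNIV :: 'd set)"
    using ex_bij_betw_nat_finite[of "UNIV :: 'd set"] by (auto simp: atLeast0LessThan)
  define B where "B = 2 * (\<Sum>u\<in>T0. \<Sum>i\<in>UNIV. \<bar>u $ i\<bar>) + 1"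
  have "\<bar>u $ i\<bar> \<le> (\<Sum>u\<in>T0. \<Sum>i\<in>UNIV. \<bar>u $ i\<bar>)" if "u \<in> T0" for u i
  proof -
    have "\<bar>u $ i\<bar> \<le> (\<Sum>i\<in>UNIV. \<bar>u $ i\<bar>)"
      by (rule member_le_sum) auto
    also have "\<dots> \<le> (\<Sum>u\<in>T0. \<Sum>i\<in>UNIV. \<bar>u $ i\<bar>)"
      using that assms by (intro member_le_sum) (auto intro: sum_nonneg)
    finally show ?thesis .
  qed
  then have "inj_on (\<lambda>u. \<Sum>i<CARD('d). u $ h i * B ^ i) T0"
    by (intro inj_on_digit_expansion[OF h]) (fastforce simp: B_def)
  moreover have "(\<Sum>i<CARD('d). (x + y) $ h i * B ^ i) = (\<Sum>i<CARD('d). x $ h i * B ^ i) + (\<Sum>i<CARD('d). y $ h i * B ^ i)"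
    for x y :: "int ^ 'd"
    by (simp add: sum.distrib distrib_right)
  ultimately show ?thesis
    by (intro exI[of _ "\<lambda>u. \<Sum>i<CARD('d). u $ h i * B ^ i"]) simp
qed

lemma supp_mod_pushforward_subset: "supp_mod p (pushforward \<psi> X) \<subseteq> \<psi> ` supp_mod p X"
proof
  fix n assume n: "n \<in> supp_mod p (pushforward \<psi> X)"
  show "n \<in> \<psi> ` supp_mod p X"
  proof (rule ccontr)
    assume "n \<notin> \<psi> ` supp_mod p X"
    then have "int p dvd (\<Sum>u\<in>{u \<in> Poly_Mapping.keys X. \<psi> u = n}. Poly_Mapping.lookup X u)"
      by (intro dvd_sum) (auto simp: supp_mod_def)
    then show False
      using n unfolding supp_mod_def lookup_pushforward by simp
  qed
qed

lemma card_supp_mod_pushforward_le: "card (supp_mod p (pushforward \<psi> X)) \<le> card (supp_mod p X)"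
proof -
  have "card (supp_mod p (pushforward \<psi> X)) \<le> card (\<psi> ` supp_mod p X)"
    by (intro card_mono supp_mod_pushforward_subset finite_imageI finite_supp_mod)
  also have "\<dots> \<le> card (supp_mod p X)"
    by (rule card_image_le[OF finite_supp_mod])
  finally show ?thesis .
qed

lemma lookup_pushforward_poly_of:
  assumes "finite {n. g n \<noteq> 0}" "inj_on \<psi> S" "{n. g n \<noteq> 0} \<subseteq> S" "g u \<noteq> 0"
  shows "Poly_Mapping.lookup (pushforward \<psi> (poly_of g)) (\<psi> u) = int (g u)"
proof -
  have "{v \<in> Poly_Mapping.keys (poly_of g). \<psi> v = \<psi> u} = {u}"
    using assms by (auto simp: keys_poly_of inj_on_def subset_iff)
  then show ?thesis
    by (simp add: lookup_pushforward lookup_poly_of[OF assms(1)])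
qed

lemma mem_supp_mod_pushforward_poly_of:
  assumes "finite {n. g n \<noteq> 0}" "inj_on \<psi> S" "{n. g n \<noteq> 0} \<subseteq> S" "g u \<noteq> 0" "g u < p"
  shows "\<psi> u \<in> supp_mod p (pushforward \<psi> (poly_of g))"
  using lookup_pushforward_poly_of[OF assms(1-4)] assms(4,5)
  by (auto simp: supp_mod_def dest: nat_dvd_not_less[rotated])

lemma supp_mod_pushforward_poly_of:
  fixes f k :: "(int ^ 'd) \<Rightarrow> nat" and \<psi> :: "(int ^ 'd) \<Rightarrow> int"
  assumes add: "\<And>x y. \<psi> (x + y) = \<psi> x + \<psi> y" and zero: "\<psi> 0 = 0"
    and inj: "inj_on \<psi> ({u. f u \<noteq> 0} \<union> {n. k n \<noteq> 0})"
    and fS: "finite {u. f u \<noteq> 0}" and fp: "\<forall>u. f u < p"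
    and kS: "finite {n. k n \<noteq> 0}" and kp: "\<forall>n. k n < p"
  shows "card {u. f u \<noteq> 0} \<le> card (supp_mod p (pushforward \<psi> (poly_of f)))"
    and "{n. k n \<noteq> 0} \<noteq> {} \<Longrightarrow> supp_mod p (pushforward \<psi> (poly_of k)) \<noteq> {}"
    and "card (supp_mod p (pushforward \<psi> (poly_of k) * pushforward \<psi> (poly_of f) ^ j))
      \<le> card (supp_mod p (poly_of k * poly_of f ^ j))"
proof -
  have "\<psi> ` {u. f u \<noteq> 0} \<subseteq> supp_mod p (pushforward \<psi> (poly_of f))"
  proof
    fix x assume "x \<in> \<psi> ` {u. f u \<noteq> 0}"
    then obtain u where "x = \<psi> u" "f u \<noteq> 0"
      by blast
    then show "x \<in> supp_mod p (pushforward \<psi> (poly_of f))"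
      using fp by (simp add: mem_supp_mod_pushforward_poly_of[OF fS inj])
  qed
  moreover have "card (\<psi> ` {u. f u \<noteq> 0}) = card {u. f u \<noteq> 0}"
    by (rule card_image[OF inj_on_subset[OF inj]]) blast
  ultimately show "card {u. f u \<noteq> 0} \<le> card (supp_mod p (pushforward \<psi> (poly_of f)))"
    by (metis card_mono finite_supp_mod)
  show "supp_mod p (pushforward \<psi> (poly_of k)) \<noteq> {}" if "{n. k n \<noteq> 0} \<noteq> {}"
  proof -
    from that obtain n0 where "k n0 \<noteq> 0"
      by blast
    then have "\<psi> n0 \<in> supp_mod p (pushforward \<psi> (poly_of k))"
      using kp by (simp add: mem_supp_mod_pushforward_poly_of[OF kS inj])
    then show ?thesis
      by blast
  qed
  have "pushforward \<psi> (poly_of k) * pushforward \<psi> (poly_of f) ^ j = pushforward \<psi> (poly_of k * poly_of f ^ j)"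
    by (simp add: pushforward_mult[OF add zero] pushforward_power[OF add zero])
  then show "card (supp_mod p (pushforward \<psi> (poly_of k) * pushforward \<psi> (poly_of f) ^ j))
      \<le> card (supp_mod p (poly_of k * poly_of f ^ j))"
    by (simp add: card_supp_mod_pushforward_le)
qed

text \<open>Project \<open>\<int>\<^sup>D\<close> to \<open>\<int>\<close> injectively on the supports of \<open>f\<close> and \<open>k\<close>, and
  choose the digit base \<open>Q = p\<^sup>e\<close> larger than the widths involved.\<close>

lemma two_power_ones_digits_le_char_rank:
  fixes f k :: "(int ^ 'd) \<Rightarrow> nat"
  assumes p: "prime p" and f: "lca_coeffs p f" "nontrivial_lca f"
    and k: "char_index p k" "{n. k n \<noteq> 0} \<noteq> {}"
  shows "\<exists>Q\<ge>2. \<forall>j. 2 ^ ones_digits Q j \<le> char_rank ((dual_lca p f ^^ j) k)"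
proof -
  have p0: "p > 0" and p2: "p \<ge> 2"
    using p prime_gt_0_nat prime_ge_2_nat by blast+
  have fS: "finite {u. f u \<noteq> 0}" and fp: "\<forall>u. f u < p"
    using f(1) unfolding lca_coeffs_def by auto
  have kS: "finite {n. k n \<noteq> 0}" and kp: "\<forall>n. k n < p"
    using k(1) unfolding char_index_def by auto
  obtain \<psi> :: "(int ^ 'd) \<Rightarrow> int" where add: "\<And>x y. \<psi> (x + y) = \<psi> x + \<psi> y" and zero: "\<psi> 0 = 0"
    and inj: "inj_on \<psi> ({u. f u \<noteq> 0} \<union> {n. k n \<noteq> 0})"
    using exists_additive_inj_on[of "{u. f u \<noteq> 0} \<union> {n. k n \<noteq> 0}"] fS kS by auto
  define A where "A = pushforward \<psi> (poly_of k)"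
  define H where "H = pushforward \<psi> (poly_of f)"
  note model = supp_mod_pushforward_poly_of[OF add zero inj fS fp kS kp, folded A_def H_def]
  have H: "card {u. f u \<noteq> 0} \<le> card (supp_mod p H)" and A: "supp_mod p A \<noteq> {}"
    using model(1,2) k(2) by blast+
  have H2: "card (supp_mod p H) \<ge> 2"
    using H f(2) unfolding nontrivial_lca_def by simp
  define K where "K = max (supp_width p H) (supp_width p A)"
  define e where "e = nat (K + supp_width p H) + 1"
  have "int e \<le> int (p ^ e)"
    using p2 less_exp[of e] power_mono[of 2 p e] by simp
  moreover have "0 \<le> supp_width p H"
    using H2 by (intro supp_width_nonneg) auto
  ultimately have e: "K + supp_width p H < int (p ^ e)"
    unfolding e_def by linarith
  have "2 ^ ones_digits (p ^ e) j \<le> char_rank ((dual_lca p f ^^ j) k)" for j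
    using two_power_ones_digits_le_card_supp_mod[OF p refl _ H2 _ e A, of j] model(3)[of j]
    unfolding char_rank_dual_lca_iterate[OF p0 fS kS kp] by (simp add: e_def K_def)
  moreover have "p \<le> p ^ e"
    using p2 power_increasing[of 1 e p] by (simp add: e_def)
  ultimately show ?thesis
    using p2 by (intro exI[of _ "p ^ e"]) auto
qed

lemma filterlim_char_rank_dual_lca_iterate:
  fixes f k :: "(int ^ 'd) \<Rightarrow> nat"
  assumes "prime p" "lca_coeffs p f" "nontrivial_lca f" "char_index p k" "{n. k n \<noteq> 0} \<noteq> {}"
    and ones: "\<forall>Q\<ge>2. filterlim (ones_digits Q) at_top F"
  shows "filterlim (\<lambda>j. char_rank ((dual_lca p f ^^ j) k)) at_top F"
proof -
  obtain Q where "Q \<ge> 2" and rank: "\<And>j. 2 ^ ones_digits Q j \<le> char_rank ((dual_lca p f ^^ j) k)"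
    using two_power_ones_digits_le_char_rank[OF assms(1-5)] by blast
  then have "filterlim (ones_digits Q) at_top F"
    using ones by blast
  then have "filterlim (\<lambda>j. 2 ^ ones_digits Q j :: nat) at_top F"
    by (rule filterlim_at_top_mono) (simp add: always_eventually less_imp_le[OF less_exp])
  then show ?thesis
    by (rule filterlim_at_top_mono) (simp add: always_eventually rank)
qed

section \<open>Cylinders and the Haar measure\<close>

lemma space_cfg_space: "space (cfg_space p) = {a. \<forall>n. a n < p}"
  unfolding cfg_space_def space_PiM PiE_UNIV_domain by auto

definition cylinder :: "nat \<Rightarrow> (int ^ 'd) set \<Rightarrow> ((int ^ 'd) \<Rightarrow> nat) \<Rightarrow> ((int ^ 'd) \<Rightarrow> nat) set" where
  "cylinder p W c = {a \<in> space (cfg_space p). \<forall>n\<in>W. a n = c n}"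

lemma cylinder_eq_prod_emb:
  assumes "\<And>i. space (M i) = {..<p}"
  shows "cylinder p W c = prod_emb UNIV M W (PiE W (\<lambda>n. {c n} \<inter> {..<p}))"
proof -
  have "x \<in> cylinder p W c \<longleftrightarrow> x \<in> prod_emb UNIV M W (PiE W (\<lambda>n. {c n} \<inter> {..<p}))" for x
    unfolding cylinder_def prod_emb_iff space_cfg_space using assms by (auto simp: PiE_iff)
  then show ?thesis
    by blast
qed

lemma sets_cylinder:
  assumes "finite W"
  shows "cylinder p W c \<in> sets (cfg_space p)"
proof -
  have "cylinder p W c = prod_emb UNIV (\<lambda>_. count_space {..<p}) W (PiE W (\<lambda>n. {c n} \<inter> {..<p}))"
    by (rule cylinder_eq_prod_emb) simp
  also have "\<dots> \<in> sets (PiM UNIV (\<lambda>_. count_space {..<p}))"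
    using assms by (intro sets_PiM_I) auto
  finally show ?thesis
    unfolding cfg_space_def by (simp add: atLeast0LessThan)
qed

lemma measurable_finitely_determined:
  fixes g :: "((int ^ 'd) \<Rightarrow> nat) \<Rightarrow> 'b"
  assumes W: "finite W"
    and determined: "\<And>a b. a \<in> space (cfg_space p) \<Longrightarrow> b \<in> space (cfg_space p) \<Longrightarrow> (\<forall>n\<in>W. a n = b n) \<Longrightarrow> g a = g b"
    and space: "\<And>a. a \<in> space (cfg_space p) \<Longrightarrow> g a \<in> space N"
  shows "g \<in> measurable (cfg_space p) N"
proof (rule measurableI)
  fix A assume "A \<in> sets N"
  let ?X = "space (cfg_space p) :: ((int ^ 'd) \<Rightarrow> nat) set"
  define R where "R = (\<lambda>a. restrict a W) ` {a \<in> ?X. g a \<in> A}"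
  have "R \<subseteq> PiE W (\<lambda>_. {..<p})"
    unfolding R_def space_cfg_space by auto
  then have "finite R"
    using W by (rule finite_subset[OF _ finite_PiE]) auto
  moreover have "g -` A \<inter> ?X = (\<Union>t\<in>R. cylinder p W t)"
  proof (intro equalityI subsetI)
    fix a assume "a \<in> g -` A \<inter> ?X"
    then show "a \<in> (\<Union>t\<in>R. cylinder p W t)"
      unfolding R_def cylinder_def by (intro UN_I[of "restrict a W"]) auto
  next
    fix a assume "a \<in> (\<Union>t\<in>R. cylinder p W t)"
    then obtain b where "b \<in> ?X" "g b \<in> A" "a \<in> cylinder p W (restrict b W)"
      unfolding R_def by auto
    then show "a \<in> g -` A \<inter> ?X"
      using determined[of a b] by (auto simp: cylinder_def)
  qed
  ultimately show "g -` A \<inter> ?X \<in> sets (cfg_space p)"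
    using W by (simp add: sets.finite_UN sets_cylinder)
qed (rule space)

lemma sets_haar: "sets (haar p) = sets (cfg_space p)"
  unfolding haar_def cfg_space_def
  by (intro sets_PiM_cong) (simp_all add: sets_uniform_count_measure_count_space)

lemma prob_space_haar: "p > 0 \<Longrightarrow> prob_space (haar p)"
  unfolding haar_def by (intro prob_space_PiM prob_space_uniform_count_measure) auto

lemma measure_haar_cylinder:
  assumes p: "p > 0" and W: "finite W" and c: "\<forall>n\<in>W. c n < p"
  shows "measure (haar p) (cylinder p W c) = (1 / real p) ^ card W"
proof -
  let ?U = "uniform_count_measure {..<p}"
  have "cylinder p W c = prod_emb UNIV (\<lambda>_. ?U) W (PiE W (\<lambda>n. {c n} \<inter> {..<p}))"
    by (rule cylinder_eq_prod_emb) (simp add: space_uniform_count_measure)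
  also have "PiE W (\<lambda>n. {c n} \<inter> {..<p}) = PiE W (\<lambda>n. {c n})"
    using c by (intro PiE_cong) auto
  finally have cylinder: "cylinder p W c = prod_emb UNIV (\<lambda>_. ?U) W (PiE W (\<lambda>n. {c n}))" .
  have "emeasure (haar p) (cylinder p W c) = (\<Prod>n\<in>W. emeasure ?U {c n})"
    unfolding cylinder haar_def atLeast0LessThan using W c p
    by (intro emeasure_PiM_emb prob_space_uniform_count_measure) (auto simp: sets_uniform_count_measure)
  also have "\<dots> = (\<Prod>n\<in>W. ennreal (1 / real p))"
    using c by (intro prod.cong refl) (simp add: emeasure_uniform_count_measure ennreal_of_nat_eq_real_of_nat
        divide_ennreal p)
  finally show ?thesis
    by (simp add: measure_def prod_ennreal ennreal_power)
qed

definition zero_extend :: "(int ^ 'd) set \<Rightarrow> ((int ^ 'd) \<Rightarrow> nat) \<Rightarrow> ((int ^ 'd) \<Rightarrow> nat)" where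
  "zero_extend W t = (\<lambda>n. if n \<in> W then t n else 0)"

lemma zero_extend_in_space: "p > 0 \<Longrightarrow> a \<in> space (cfg_space p) \<Longrightarrow> zero_extend W a \<in> space (cfg_space p)"
  unfolding space_cfg_space zero_extend_def by auto

lemma finite_support_zero_extend: "finite W \<Longrightarrow> finite {n. zero_extend W t n \<noteq> 0}"
  by (rule finite_subset[of _ W]) (auto simp: zero_extend_def)

lemma character_zero_extend:
  assumes W: "finite W"
  shows "character p (zero_extend W t) b = (\<Prod>n\<in>W. root_unity p (int (t n * b n)))"
proof -
  have "character p (zero_extend W t) b
      = (\<Prod>n\<in>W. cis (2 * pi * real (zero_extend W t n * b n) / real p))"
    unfolding character_def
  proof (rule prod.mono_neutral_left[OF W])
    show "{n. zero_extend W t n \<noteq> 0} \<subseteq> W"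
      by (auto simp: zero_extend_def)
    show "\<forall>i\<in>W - {n. zero_extend W t n \<noteq> 0}. cis (2 * pi * real (zero_extend W t i * b i) / real p) = 1"
      by simp
  qed
  also have "\<dots> = (\<Prod>n\<in>W. root_unity p (int (t n * b n)))"
    by (intro prod.cong refl) (simp add: zero_extend_def root_unity_def)
  finally show ?thesis .
qed

text \<open>Fourier expansion of the indicator of a cylinder, by orthogonality
  of the characters of \<open>(\<int>/p)\<^sup>W\<close>.\<close>

lemma indicator_cylinder_eq_sum_characters:
  assumes p: "p > 0" and W: "finite W" and a: "a \<in> space (cfg_space p)" and c: "\<forall>n\<in>W. c n < p"
  shows "complex_of_real (indicator (cylinder p W c) a) =
    (\<Sum>t\<in>PiE W (\<lambda>_. {..<p}). cnj (character p (zero_extend W t) c) * character p (zero_extend W t) a)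
      / of_nat (p ^ card W)"
proof -
  have ap: "a n < p" for n
    using a unfolding space_cfg_space by simp
  have char_term: "cnj (character p (zero_extend W t) c) * character p (zero_extend W t) a
      = (\<Prod>n\<in>W. root_unity p (int (t n) * (int (a n) - int (c n))))" for t
    unfolding character_zero_extend[OF W] cnj_prod prod.distrib[symmetric]
    by (intro prod.cong refl) (simp add: cnj_root_unity_mult right_diff_distrib)
  have unit: "int p dvd int (a n) - int (c n) \<longleftrightarrow> a n = c n" if "n \<in> W" for n
    using ap[of n] c that by (auto simp: mod_eq_dvd_iff[symmetric] zmod_int)
  have "(\<Sum>t\<in>PiE W (\<lambda>_. {..<p}). cnj (character p (zero_extend W t) c) * character p (zero_extend W t) a)
      = (\<Prod>n\<in>W. \<Sum>s<p. root_unity p (int s * (int (a n) - int (c n))))"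
    unfolding char_term using W by (rule prod_sum_PiE[symmetric]) auto
  also have "\<dots> = (\<Prod>n\<in>W. if a n = c n then of_nat p else 0)"
    by (intro prod.cong refl) (simp add: sum_root_unity[OF p] unit)
  also have "\<dots> = (if \<forall>n\<in>W. a n = c n then of_nat (p ^ card W) else 0)"
    using W by (auto simp: prod_zero_iff)
  finally show ?thesis
    using p a by (auto simp: cylinder_def indicator_def)
qed

lemma lca_less: "p > 0 \<Longrightarrow> lca p f a n < p"
  unfolding lca_def by simp

lemma lca_measurable:
  fixes f :: "(int ^ 'd) \<Rightarrow> nat"
  assumes p: "p > 0" and fS: "finite {u. f u \<noteq> 0}"
  shows "lca p f \<in> measurable (cfg_space p) (cfg_space p)"
proof -
  have "(\<lambda>a n. lca p f a n) \<in> measurable (cfg_space p) (PiM UNIV (\<lambda>_. count_space {0..<p}))"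
  proof (rule measurable_PiM_single')
    fix n :: "int ^ 'd"
    show "(\<lambda>a. lca p f a n) \<in> measurable (cfg_space p) (count_space {0..<p})"
    proof (rule measurable_finitely_determined[where W="(\<lambda>u. u + n) ` {u. f u \<noteq> 0}"])
      fix a b :: "(int ^ 'd) \<Rightarrow> nat"
      assume "\<forall>m\<in>(\<lambda>u. u + n) ` {u. f u \<noteq> 0}. a m = b m"
      then show "lca p f a n = lca p f b n"
        unfolding lca_def by (intro arg_cong2[where f="(mod)"] sum.cong refl) auto
    qed (use fS lca_less[OF p] in auto)
  qed (use lca_less[OF p] in auto)
  then show ?thesis
    unfolding cfg_space_def by simp
qed

lemma lca_iterate_measurable:
  assumes "p > 0" "finite {u. f u \<noteq> 0}"
  shows "(lca p f ^^ j) \<in> measurable (cfg_space p) (cfg_space p)"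
  by (induction j) (auto intro: measurable_compose[OF _ lca_measurable[OF assms]])

lemma character_measurable:
  fixes k :: "(int ^ 'd) \<Rightarrow> nat"
  assumes "finite {n. k n \<noteq> 0}"
  shows "character p k \<in> borel_measurable (cfg_space p)"
proof (rule measurable_finitely_determined[OF assms])
  fix a b :: "(int ^ 'd) \<Rightarrow> nat"
  assume "\<forall>n\<in>{n. k n \<noteq> 0}. a n = b n"
  then show "character p k a = character p k b"
    unfolding character_def by (intro prod.cong refl) auto
qed simp

section \<open>Continuous observables\<close>

lemma compact_space_cfg_space: "compact (space (cfg_space p) :: ((int ^ 'd) \<Rightarrow> nat) set)"
proof -
  have "compactin (product_topology (\<lambda>_. euclidean) (UNIV :: (int ^ 'd) set)) (PiE UNIV (\<lambda>_. {0..<p}))"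
    by (simp add: compactin_PiE finite_imp_compact)
  then show ?thesis
    unfolding cfg_space_def space_PiM euclidean_product_topology by simp
qed

lemma open_agree_on_finite:
  assumes "finite W"
  shows "open {b :: (int ^ 'd) \<Rightarrow> nat. \<forall>n\<in>W. b n = a n}"
proof -
  have "open {b :: (int ^ 'd) \<Rightarrow> nat. \<forall>n\<in>W. b (id n) \<in> {a n}}"
    by (rule product_topology_basis'[OF assms]) (simp add: discrete_topology_class.open_discrete)
  then show ?thesis
    by simp
qed

definition nearly_determined :: "nat \<Rightarrow> (int ^ 'd) set \<Rightarrow> real \<Rightarrow> (((int ^ 'd) \<Rightarrow> nat) \<Rightarrow> real) \<Rightarrow> bool" where
  "nearly_determined p W \<epsilon> g \<longleftrightarrow>
    (\<forall>a\<in>space (cfg_space p). \<forall>b\<in>space (cfg_space p). (\<forall>n\<in>W. a n = b n) \<longrightarrow> \<bar>g a - g b\<bar> < \<epsilon>)"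

lemma continuous_locally_nearly_determined:
  fixes g :: "((int ^ 'd) \<Rightarrow> nat) \<Rightarrow> real"
  assumes cont: "continuous_on (space (cfg_space p)) g" and \<epsilon>: "\<epsilon> > 0" and a: "a \<in> space (cfg_space p)"
  shows "\<exists>V. finite V \<and> (\<forall>b\<in>space (cfg_space p). (\<forall>n\<in>V. b n = a n) \<longrightarrow> \<bar>g b - g a\<bar> < \<epsilon>)"
proof -
  obtain A where A: "open A" "a \<in> A" "\<And>b. b \<in> space (cfg_space p) \<Longrightarrow> b \<in> A \<Longrightarrow> g b \<in> ball (g a) \<epsilon>"
    using cont a \<epsilon> unfolding continuous_on_topological by (metis centre_in_ball open_ball)
  have "openin (product_topology (\<lambda>_. euclidean) UNIV) A"
    using A(1) unfolding open_fun_def .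
  from product_topology_open_contains_basis[OF this A(2)]
  obtain V where V: "a \<in> PiE UNIV V" "finite {i. V i \<noteq> UNIV}" "PiE UNIV V \<subseteq> A"
    by auto
  have "\<bar>g b - g a\<bar> < \<epsilon>" if "b \<in> space (cfg_space p)" "\<forall>n\<in>{i. V i \<noteq> UNIV}. b n = a n" for b
  proof -
    have "b \<in> PiE UNIV V"
    proof (unfold PiE_UNIV_domain, rule Pi_I)
      fix n
      show "b n \<in> V n"
        using that(2) V(1) by (cases "V n = UNIV") (auto simp: PiE_iff)
    qed
    then show ?thesis
      using A(3) that(1) V(3) by (force simp: dist_real_def abs_minus_commute)
  qed
  then show ?thesis
    using V(2) by blast
qed

text \<open>Compactness makes the approximation by finitely many coordinates uniform.\<close>

lemma continuous_nearly_determined: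
  fixes g :: "((int ^ 'd) \<Rightarrow> nat) \<Rightarrow> real"
  assumes cont: "continuous_on (space (cfg_space p)) g" and \<epsilon>: "\<epsilon> > 0"
  shows "\<exists>W. finite W \<and> nearly_determined p W \<epsilon> g"
proof -
  let ?X = "space (cfg_space p) :: ((int ^ 'd) \<Rightarrow> nat) set"
  have "\<forall>a\<in>?X. \<exists>V. finite V \<and> (\<forall>b\<in>?X. (\<forall>n\<in>V. b n = a n) \<longrightarrow> \<bar>g b - g a\<bar> < \<epsilon> / 2)"
    using \<epsilon> by (intro ballI continuous_locally_nearly_determined[OF cont]) auto
  from bchoice[OF this] obtain V where
    V: "\<forall>a\<in>?X. finite (V a) \<and> (\<forall>b\<in>?X. (\<forall>n\<in>V a. b n = a n) \<longrightarrow> \<bar>g b - g a\<bar> < \<epsilon> / 2)"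
    by blast
  let ?O = "\<lambda>a. {b. \<forall>n\<in>V a. b n = a n}"
  have "open (?O a)" if "a \<in> ?X" for a
    using V that by (intro open_agree_on_finite) blast
  moreover have "?X \<subseteq> (\<Union>a\<in>?X. ?O a)"
    by blast
  ultimately obtain C where C: "C \<subseteq> ?X" "finite C" "?X \<subseteq> (\<Union>a\<in>C. ?O a)"
    by (rule compactE_image[OF compact_space_cfg_space])
  have "\<bar>g a - g b\<bar> < \<epsilon>" if ab: "a \<in> ?X" "b \<in> ?X" "\<forall>n\<in>(\<Union>c\<in>C. V c). a n = b n" for a b
  proof -
    obtain c where c: "c \<in> C" "a \<in> ?O c"
      using C(3) ab(1) by blast
    then have "c \<in> ?X" "\<forall>n\<in>V c. a n = c n"
      using C(1) by auto
    moreover have "\<forall>n\<in>V c. b n = c n"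
      using calculation(2) ab(3) c(1) by auto
    ultimately have "\<bar>g a - g c\<bar> < \<epsilon> / 2" "\<bar>g b - g c\<bar> < \<epsilon> / 2"
      using V ab(1,2) by blast+
    then show ?thesis
      by linarith
  qed
  moreover have "finite (\<Union>c\<in>C. V c)"
    using C V by blast
  ultimately show ?thesis
    unfolding nearly_determined_def by blast
qed

lemma abs_diff_zero_extend_less:
  assumes "nearly_determined p W \<epsilon> g" "p > 0" "a \<in> space (cfg_space p)"
  shows "\<bar>g a - g (zero_extend W a)\<bar> < \<epsilon>"
  using assms zero_extend_in_space[OF assms(2,3), of W]
  unfolding nearly_determined_def by (auto simp: zero_extend_def)

lemma measurable_zero_extend:
  assumes "finite W"
  shows "(\<lambda>a. g (zero_extend W a)) \<in> borel_measurable (cfg_space p)"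
  by (rule measurable_finitely_determined[OF assms]) (auto simp: zero_extend_def intro!: arg_cong[where f=g])

lemma continuous_borel_measurable:
  fixes g :: "((int ^ 'd) \<Rightarrow> nat) \<Rightarrow> real"
  assumes p: "p > 0" and cont: "continuous_on (space (cfg_space p)) g"
  shows "g \<in> borel_measurable (cfg_space p)"
proof -
  have "\<forall>i. \<exists>W. finite W \<and> nearly_determined p W (1 / real (Suc i)) g"
    by (intro allI continuous_nearly_determined[OF cont]) simp
  then obtain W where W: "\<And>i. finite (W i)" "\<And>i. nearly_determined p (W i) (1 / real (Suc i)) g"
    by metis
  show ?thesis
  proof (rule borel_measurable_LIMSEQ_real[where u="\<lambda>i a. g (zero_extend (W i) a)"])
    fix a :: "(int ^ 'd) \<Rightarrow> nat" assume a: "a \<in> space (cfg_space p)"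
    have "(\<lambda>i. g (zero_extend (W i) a) - g a) \<longlonglongrightarrow> 0"
    proof (rule LIMSEQ_norm_0)
      fix i
      have "\<bar>g a - g (zero_extend (W i) a)\<bar> < 1 / real (Suc i)"
        by (rule abs_diff_zero_extend_less[OF W(2) p a])
      then show "norm (g (zero_extend (W i) a) - g a) < 1 / real (Suc i)"
        by (simp only: real_norm_def abs_minus_commute)
    qed
    then show "(\<lambda>i. g (zero_extend (W i) a)) \<longlonglongrightarrow> g a"
      using Lim_null by blast
  qed (rule measurable_zero_extend[OF W(1)])
qed

lemma continuous_bounded:
  fixes g :: "((int ^ 'd) \<Rightarrow> nat) \<Rightarrow> real"
  assumes "continuous_on (space (cfg_space p)) g"
  shows "\<exists>B. \<forall>a\<in>space (cfg_space p). \<bar>g a\<bar> \<le> B"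
  using compact_imp_bounded[OF compact_continuous_image[OF assms compact_space_cfg_space]]
  unfolding bounded_iff by auto

context
  fixes \<nu> :: "((int ^ 'd) \<Rightarrow> nat) measure" and p :: nat
  assumes prob: "prob_space \<nu>" and sets_eq: "sets \<nu> = sets (cfg_space p)"
begin

interpretation prob_space \<nu>
  by (rule prob)

lemma space_eq: "space \<nu> = space (cfg_space p)"
  by (rule sets_eq_imp_space_eq[OF sets_eq])

lemma integrable_bounded:
  fixes g :: "((int ^ 'd) \<Rightarrow> nat) \<Rightarrow> real"
  assumes "g \<in> borel_measurable (cfg_space p)" "\<forall>a\<in>space (cfg_space p). \<bar>g a\<bar> \<le> B"
  shows "integrable \<nu> g"
  using assms by (intro integrable_const_bound[where B=B])
    (auto simp: space_eq measurable_cong_sets[OF sets_eq refl])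

lemma abs_integral_diff_le:
  fixes g h :: "((int ^ 'd) \<Rightarrow> nat) \<Rightarrow> real"
  assumes "integrable \<nu> g" "integrable \<nu> h" "\<forall>a\<in>space (cfg_space p). \<bar>g a - h a\<bar> \<le> \<epsilon>"
  shows "\<bar>integral\<^sup>L \<nu> g - integral\<^sup>L \<nu> h\<bar> \<le> \<epsilon>"
proof -
  have "\<bar>integral\<^sup>L \<nu> g - integral\<^sup>L \<nu> h\<bar> \<le> integral\<^sup>L \<nu> (\<lambda>x. \<bar>g x - h x\<bar>)"
    using integral_norm_bound[of \<nu> "\<lambda>x. g x - h x"] assms(1,2) by simp
  also have "\<dots> \<le> \<epsilon>"
    using assms by (intro integral_le_const) (auto simp: space_eq)
  finally show ?thesis .
qed

lemma integral_zero_extend: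
  assumes W: "finite W"
  shows "integral\<^sup>L \<nu> (\<lambda>a. g (zero_extend W a))
    = (\<Sum>t\<in>PiE W (\<lambda>_. {..<p}). g (zero_extend W t) * measure \<nu> (cylinder p W t))"
proof -
  have cylinder: "cylinder p W t \<in> sets \<nu>" for t
    using sets_cylinder[OF W] sets_eq by simp
  have "g (zero_extend W a) = (\<Sum>t\<in>PiE W (\<lambda>_. {..<p}). g (zero_extend W t) * indicator (cylinder p W t) a)"
    if a: "a \<in> space \<nu>" for a
  proof -
    have "a \<in> cylinder p W t \<longleftrightarrow> t = restrict a W" if "t \<in> PiE W (\<lambda>_. {..<p})" for t
      using a that by (auto simp: cylinder_def space_eq PiE_iff extensional_def fun_eq_iff)
    then have "(\<Sum>t\<in>PiE W (\<lambda>_. {..<p}). g (zero_extend W t) * indicator (cylinder p W t) a)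
        = (\<Sum>t\<in>PiE W (\<lambda>_. {..<p}). if t = restrict a W then g (zero_extend W t) else 0)"
      by (intro sum.cong refl) (simp add: indicator_def)
    also have "\<dots> = g (zero_extend W (restrict a W))"
      using a W by (simp add: finite_PiE space_eq space_cfg_space)
    also have "zero_extend W (restrict a W) = zero_extend W a"
      by (auto simp: zero_extend_def)
    finally show ?thesis ..
  qed
  then have "integral\<^sup>L \<nu> (\<lambda>a. g (zero_extend W a))
      = integral\<^sup>L \<nu> (\<lambda>a. \<Sum>t\<in>PiE W (\<lambda>_. {..<p}). g (zero_extend W t) * indicator (cylinder p W t) a)"
    by (intro Bochner_Integration.integral_cong) auto
  also have "\<dots> = (\<Sum>t\<in>PiE W (\<lambda>_. {..<p}). g (zero_extend W t) * measure \<nu> (cylinder p W t))"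
    using cylinder
    by (subst Bochner_Integration.integral_sum) (auto simp: emeasure_eq_measure intro!: integrable_real_indicator)
  finally show ?thesis .
qed

end

section \<open>Convergence to the Haar measure\<close>

locale mixing_lca =
  fixes p :: nat and f :: "(int ^ 'd) \<Rightarrow> nat" and \<mu> :: "((int ^ 'd) \<Rightarrow> nat) measure"
  assumes prime: "prime p" and coeffs: "lca_coeffs p f" and nontrivial: "nontrivial_lca f"
    and prob: "prob_space \<mu>" and sets_\<mu>: "sets \<mu> = sets (cfg_space p)"
    and mixing: "harmonically_mixing p \<mu>"
begin

abbreviation \<nu> :: "nat \<Rightarrow> ((int ^ 'd) \<Rightarrow> nat) measure" where
  "\<nu> j \<equiv> distr \<mu> (cfg_space p) (lca p f ^^ j)"

lemma p_pos: "p > 0"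
  using prime prime_gt_0_nat by blast

lemma finite_support_f: "finite {u. f u \<noteq> 0}"
  using coeffs unfolding lca_coeffs_def by simp

lemma lca_iterate_measurable_\<mu>: "(lca p f ^^ j) \<in> measurable \<mu> (cfg_space p)"
  using lca_iterate_measurable[OF p_pos finite_support_f] measurable_cong_sets[OF sets_\<mu> refl] by blast

lemma prob_space_\<nu>: "prob_space (\<nu> j)"
  by (rule prob_space.prob_space_distr[OF prob lca_iterate_measurable_\<mu>])

lemma integrable_character:
  assumes "finite {n. k n \<noteq> 0}"
  shows "integrable \<mu> (character p k)"
proof -
  interpret prob_space \<mu>
    by (rule prob)
  show ?thesis
    using character_measurable[OF assms] measurable_cong_sets[OF sets_\<mu> refl]
    by (intro integrable_const_bound[where B=1]) (auto simp: norm_character)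
qed

lemma measure_cylinder_eq_sum_characters:
  assumes W: "finite W" and c: "\<forall>n\<in>W. c n < p"
  shows "complex_of_real (measure (\<nu> j) (cylinder p W c)) =
    (\<Sum>t\<in>PiE W (\<lambda>_. {..<p}). cnj (character p (zero_extend W t) c)
        * integral\<^sup>L \<mu> (character p ((dual_lca p f ^^ j) (zero_extend W t)))) / of_nat (p ^ card W)"
proof -
  let ?T = "PiE W (\<lambda>_. {..<p}) :: ((int ^ 'd) \<Rightarrow> nat) set"
  let ?\<chi> = "\<lambda>t. character p ((dual_lca p f ^^ j) (zero_extend W t))"
  have cylinder: "cylinder p W c \<in> sets (cfg_space p)"
    by (rule sets_cylinder[OF W])
  have "measure (\<nu> j) (cylinder p W c) = integral\<^sup>L (\<nu> j) (indicator (cylinder p W c))"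
    using sets.sets_into_space[OF cylinder] by (simp add: Int_absorb2)
  also have "\<dots> = integral\<^sup>L \<mu> (\<lambda>x. indicator (cylinder p W c) ((lca p f ^^ j) x))"
    by (rule integral_distr[OF lca_iterate_measurable_\<mu> borel_measurable_indicator[OF cylinder]])
  finally have "complex_of_real (measure (\<nu> j) (cylinder p W c))
      = integral\<^sup>L \<mu> (\<lambda>x. complex_of_real (indicator (cylinder p W c) ((lca p f ^^ j) x)))"
    by simp
  also have "\<dots> = integral\<^sup>L \<mu> (\<lambda>x. (\<Sum>t\<in>?T. cnj (character p (zero_extend W t) c) * ?\<chi> t x) / of_nat (p ^ card W))"
  proof (rule Bochner_Integration.integral_cong[OF refl])
    fix x assume "x \<in> space \<mu>"
    then have "(lca p f ^^ j) x \<in> space (cfg_space p)"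
      using measurable_space[OF lca_iterate_measurable_\<mu>] by blast
    then show "complex_of_real (indicator (cylinder p W c) ((lca p f ^^ j) x))
        = (\<Sum>t\<in>?T. cnj (character p (zero_extend W t) c) * ?\<chi> t x) / of_nat (p ^ card W)"
      by (simp add: indicator_cylinder_eq_sum_characters[OF p_pos W _ c]
          character_lca_iterate[OF p_pos finite_support_f finite_support_zero_extend[OF W]])
  qed
  also have "\<dots> = integral\<^sup>L \<mu> (\<lambda>x. \<Sum>t\<in>?T. cnj (character p (zero_extend W t) c) * ?\<chi> t x) / of_nat (p ^ card W)"
    by (rule integral_divide_zero)
  also have "integral\<^sup>L \<mu> (\<lambda>x. \<Sum>t\<in>?T. cnj (character p (zero_extend W t) c) * ?\<chi> t x)
      = (\<Sum>t\<in>?T. integral\<^sup>L \<mu> (\<lambda>x. cnj (character p (zero_extend W t) c) * ?\<chi> t x))"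
    by (intro Bochner_Integration.integral_sum integrable_mult_right integrable_character
        finite_support_dual_lca_iterate[OF finite_support_f] finite_support_zero_extend[OF W])
  also have "\<dots> = (\<Sum>t\<in>?T. cnj (character p (zero_extend W t) c) * integral\<^sup>L \<mu> (?\<chi> t))"
    by (intro sum.cong refl integral_mult_right_zero)
  finally show ?thesis .
qed

lemma abs_integral_le:
  fixes g :: "((int ^ 'd) \<Rightarrow> nat) \<Rightarrow> real"
  assumes "continuous_on (space (cfg_space p)) g" "\<forall>a\<in>space (cfg_space p). \<bar>g a\<bar> \<le> B"
  shows "\<bar>integral\<^sup>L (\<nu> j) g\<bar> \<le> B"
proof -
  interpret \<nu>: prob_space "\<nu> j"
    by (rule prob_space_\<nu>)
  have "integrable (\<nu> j) g"
    by (rule integrable_bounded[OF prob_space_\<nu> sets_distr continuous_borel_measurable[OF p_pos assms(1)] assms(2)])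
  then have "\<bar>integral\<^sup>L (\<nu> j) g\<bar> \<le> integral\<^sup>L (\<nu> j) (\<lambda>x. \<bar>g x\<bar>)"
    using integral_norm_bound[of "\<nu> j" g] by simp
  also have "\<dots> \<le> B"
    using \<open>integrable (\<nu> j) g\<close> assms(2) by (intro \<nu>.integral_le_const) auto
  finally show ?thesis .
qed

context
  fixes F :: "nat filter"
  assumes ones_digits_tendsto: "\<forall>Q\<ge>2. filterlim (ones_digits Q) at_top F"
begin

lemma integral_character_dual_lca_iterate_tendsto:
  assumes k: "char_index p k" "{n. k n \<noteq> 0} \<noteq> {}"
  shows "((\<lambda>j. integral\<^sup>L \<mu> (character p ((dual_lca p f ^^ j) k))) \<longlongrightarrow> 0) F"
proof (rule tendstoI)
  fix \<epsilon> :: real assume "\<epsilon> > 0"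
  then obtain R where R: "\<And>k. char_index p k \<Longrightarrow> R < char_rank k \<Longrightarrow> cmod (integral\<^sup>L \<mu> (character p k)) < \<epsilon>"
    using mixing unfolding harmonically_mixing_def by blast
  have "eventually (\<lambda>j. Suc R \<le> char_rank ((dual_lca p f ^^ j) k)) F"
    using filterlim_char_rank_dual_lca_iterate[OF prime coeffs nontrivial k ones_digits_tendsto]
    unfolding filterlim_at_top by blast
  then show "eventually (\<lambda>j. dist (integral\<^sup>L \<mu> (character p ((dual_lca p f ^^ j) k))) 0 < \<epsilon>) F"
    by eventually_elim (simp add: R char_index_dual_lca_iterate[OF p_pos finite_support_f k(1)])
qed

lemma cnj_character_mult_integral_tendsto:
  assumes W: "finite W" and t: "t \<in> PiE W (\<lambda>_. {..<p})"
  shows "((\<lambda>j. cnj (character p (zero_extend W t) c) * integral\<^sup>L \<mu> (character p ((dual_lca p f ^^ j) (zero_extend W t))))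
    \<longlongrightarrow> (if t = restrict (\<lambda>_. 0) W then 1 else 0)) F"
proof (cases "t = restrict (\<lambda>_. 0) W")
  case True
  then have zero: "zero_extend W t = (\<lambda>_. 0)"
    by (auto simp: zero_extend_def)
  have char0: "character p (\<lambda>_. 0) = (\<lambda>_. 1)"
    by (rule ext) simp
  have "integral\<^sup>L \<mu> (character p ((dual_lca p f ^^ j) (zero_extend W t))) = 1" for j
    unfolding zero dual_lca_zero char0 using prob_space.prob_space[OF prob] by simp
  moreover have "cnj (character p (zero_extend W t) c) = 1"
    unfolding zero by simp
  ultimately show ?thesis
    using True by simp
next
  case False
  have "\<exists>n\<in>W. t n \<noteq> 0"
  proof (rule ccontr)
    assume "\<not> (\<exists>n\<in>W. t n \<noteq> 0)"
    then have "t = restrict (\<lambda>_. 0) W"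
      using t by (auto simp: PiE_iff extensional_def fun_eq_iff)
    then show False
      using False by simp
  qed
  then have "{n. zero_extend W t n \<noteq> 0} \<noteq> {}"
    by (auto simp: zero_extend_def)
  moreover have "char_index p (zero_extend W t)"
    unfolding char_index_def using finite_support_zero_extend[OF W] t p_pos
    by (auto simp: zero_extend_def PiE_iff)
  ultimately show ?thesis
    using False integral_character_dual_lca_iterate_tendsto
    by (simp add: tendsto_mult_right_zero)
qed

lemma measure_cylinder_tendsto:
  assumes W: "finite W" and c: "\<forall>n\<in>W. c n < p"
  shows "((\<lambda>j. measure (\<nu> j) (cylinder p W c)) \<longlongrightarrow> (1 / real p) ^ card W) F"
proof -
  let ?T = "PiE W (\<lambda>_. {..<p}) :: ((int ^ 'd) \<Rightarrow> nat) set"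
  have "((\<lambda>j. complex_of_real (measure (\<nu> j) (cylinder p W c)))
      \<longlongrightarrow> (\<Sum>t\<in>?T. if t = restrict (\<lambda>_. 0) W then 1 else 0) / of_nat (p ^ card W)) F"
    unfolding measure_cylinder_eq_sum_characters[OF W c]
    by (intro tendsto_divide tendsto_sum tendsto_const cnj_character_mult_integral_tendsto[OF W])
      (use p_pos in auto)
  moreover have "(\<Sum>t\<in>?T. if t = restrict (\<lambda>_. 0) W then 1 else 0 :: complex) / of_nat (p ^ card W)
      = complex_of_real ((1 / real p) ^ card W)"
    using W p_pos by (simp add: finite_PiE power_divide)
  ultimately show ?thesis
    by (simp only: tendsto_of_real_iff)
qed

lemma integral_zero_extend_tendsto:
  fixes g :: "((int ^ 'd) \<Rightarrow> nat) \<Rightarrow> real"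
  assumes W: "finite W"
  shows "((\<lambda>j. integral\<^sup>L (\<nu> j) (\<lambda>a. g (zero_extend W a)))
    \<longlongrightarrow> integral\<^sup>L (haar p) (\<lambda>a. g (zero_extend W a))) F"
proof -
  have "((\<lambda>j. \<Sum>t\<in>PiE W (\<lambda>_. {..<p}). g (zero_extend W t) * measure (\<nu> j) (cylinder p W t))
      \<longlongrightarrow> (\<Sum>t\<in>PiE W (\<lambda>_. {..<p}). g (zero_extend W t) * (1 / real p) ^ card W)) F"
    by (intro tendsto_sum tendsto_mult tendsto_const measure_cylinder_tendsto[OF W]) auto
  also have "(\<Sum>t\<in>PiE W (\<lambda>_. {..<p}). g (zero_extend W t) * (1 / real p) ^ card W)
      = integral\<^sup>L (haar p) (\<lambda>a. g (zero_extend W a))"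
    unfolding integral_zero_extend[OF prob_space_haar[OF p_pos] sets_haar W]
    by (intro sum.cong refl) (auto simp: measure_haar_cylinder[OF p_pos W] PiE_iff)
  finally show ?thesis
    unfolding integral_zero_extend[OF prob_space_\<nu> sets_distr W] .
qed

text \<open>A continuous observable is uniformly close to one depending on
  finitely many coordinates, whose integral is a combination of cylinder
  measures.\<close>

lemma integral_continuous_tendsto:
  fixes g :: "((int ^ 'd) \<Rightarrow> nat) \<Rightarrow> real"
  assumes cont: "continuous_on (space (cfg_space p)) g"
  shows "((\<lambda>j. integral\<^sup>L (\<nu> j) g) \<longlongrightarrow> integral\<^sup>L (haar p) g) F"
proof (rule tendstoI)
  fix \<epsilon> :: real assume \<epsilon>: "\<epsilon> > 0"
  have haar: "prob_space (haar p)"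
    by (rule prob_space_haar[OF p_pos])
  have g: "g \<in> borel_measurable (cfg_space p)"
    by (rule continuous_borel_measurable[OF p_pos cont])
  obtain B where B: "\<forall>a\<in>space (cfg_space p). \<bar>g a\<bar> \<le> B"
    using continuous_bounded[OF cont] by blast
  obtain W where W: "finite W" "nearly_determined p W (\<epsilon> / 4) g"
    using continuous_nearly_determined[OF cont, of "\<epsilon> / 4"] \<epsilon> by auto
  let ?h = "\<lambda>a. g (zero_extend W a)"
  have h: "?h \<in> borel_measurable (cfg_space p)" "\<forall>a\<in>space (cfg_space p). \<bar>?h a\<bar> \<le> B"
    using measurable_zero_extend[OF W(1)] B zero_extend_in_space[OF p_pos, of _ W] by simp_all
  have close: "\<forall>a\<in>space (cfg_space p). \<bar>g a - ?h a\<bar> \<le> \<epsilon> / 4"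
    using abs_diff_zero_extend_less[OF W(2) p_pos] by (auto intro: less_imp_le)
  have close_\<nu>: "\<bar>integral\<^sup>L (\<nu> j) g - integral\<^sup>L (\<nu> j) ?h\<bar> \<le> \<epsilon> / 4" for j
    using integrable_bounded[OF prob_space_\<nu> sets_distr g B] integrable_bounded[OF prob_space_\<nu> sets_distr h]
    by (rule abs_integral_diff_le[OF prob_space_\<nu> sets_distr _ _ close])
  have close_haar: "\<bar>integral\<^sup>L (haar p) g - integral\<^sup>L (haar p) ?h\<bar> \<le> \<epsilon> / 4"
    using integrable_bounded[OF haar sets_haar g B] integrable_bounded[OF haar sets_haar h]
    by (rule abs_integral_diff_le[OF haar sets_haar _ _ close])
  have "eventually (\<lambda>j. dist (integral\<^sup>L (\<nu> j) ?h) (integral\<^sup>L (haar p) ?h) < \<epsilon> / 4) F"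
    using \<epsilon> by (intro tendstoD integral_zero_extend_tendsto W(1)) auto
  then show "eventually (\<lambda>j. dist (integral\<^sup>L (\<nu> j) g) (integral\<^sup>L (haar p) g) < \<epsilon>) F"
  proof eventually_elim
    case (elim j)
    then show ?case
      using close_\<nu>[of j] close_haar unfolding dist_real_def by linarith
  qed
qed

end

end

theorem mainTheorem12:
  fixes p :: nat and f :: "(int ^ 'd) \<Rightarrow> nat" and \<mu> :: "((int ^ 'd) \<Rightarrow> nat) measure"
  assumes "prime p"
    and "lca_coeffs p f" and "nontrivial_lca f"
    and "prob_space \<mu>" and "sets \<mu> = sets (cfg_space p)"
    and "harmonically_mixing p \<mu>"
  shows "\<exists>J. J \<subseteq> {1..} \<and> cesaro_density_one J \<and>
           weak_star_along p (\<lambda>j. distr \<mu> (cfg_space p) (lca p f ^^ j)) J (haar p)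
         \<and> (\<forall>g :: ((int ^ 'd) \<Rightarrow> nat) \<Rightarrow> real. continuous_on (space (cfg_space p)) g \<longrightarrow>
              ((\<lambda>N. (\<Sum>n=1..N. integral\<^sup>L (distr \<mu> (cfg_space p) (lca p f ^^ n)) g) / real N)
                 \<longlonglongrightarrow> integral\<^sup>L (haar p) g))"
proof -
  interpret mixing_lca p f \<mu>
    using assms by (rule mixing_lca.intro)
  obtain J where J: "J \<subseteq> {1..}" "cesaro_density_one J"
    and ones: "\<forall>Q\<ge>2. filterlim (ones_digits Q) at_top (sequentially \<sqinter> principal J)"
    using exists_density_one_ones_digits_tendsto by blast
  have weak_star: "((\<lambda>j. integral\<^sup>L (\<nu> j) g) \<longlongrightarrow> integral\<^sup>L (haar p) g) (sequentially \<sqinter> principal J)"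
    if "continuous_on (space (cfg_space p)) g" for g :: "((int ^ 'd) \<Rightarrow> nat) \<Rightarrow> real"
    by (rule integral_continuous_tendsto[OF ones that])
  have cesaro: "((\<lambda>N. (\<Sum>n=1..N. integral\<^sup>L (\<nu> n) g) / real N) \<longlonglongrightarrow> integral\<^sup>L (haar p) g)"
    if cont: "continuous_on (space (cfg_space p)) g" for g :: "((int ^ 'd) \<Rightarrow> nat) \<Rightarrow> real"
  proof -
    obtain B where "\<forall>a\<in>space (cfg_space p). \<bar>g a\<bar> \<le> B"
      using continuous_bounded[OF cont] by blast
    then show ?thesis
      by (rule cesaro_mean_tendsto[OF J(2) abs_integral_le[OF cont] weak_star[OF cont]])
  qed
  show ?thesis
    unfolding weak_star_along_def by (intro exI[of _ J] conjI J allI impI weak_star cesaro)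
qed

end
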